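(* The following are equivalent: (A) the $K$-linear map $\mathrm{eval}_\int:P(\mathcal{A})\to\mathbb{C}$ is injective (i.e. the period conjecture holds for $(\mathcal{A},H_B,H_{dR},\int)$); (B) for all $M\in\mathcal{A}$, $\sigma\in H_B(M)$ and $\omega\in H_{dR}(M)^\vee$ with $\int_\sigma\omega=0$ there exists a short exact sequence $0\to N'\xrightarrow{s}M\xrightarrow{p}N\to0$ in $\mathcal{A}$ with $\sigma\in H_B(s)(H_B(N'))$ and $\omega\in p^\vee(H_{dR}(N)^\vee)$.
   Context: Let $K\subseteq\mathbb{C}$ be a subfield and $\mathcal{A}$ a $\mathbb{Q}$-linear abelian category. A fiber functor over a field $F\supseteq\mathbb{Q}$ is a $\mathbb{Q}$-linear, exact, faithful covariant functor from $\mathcal{A}$ to finite-dimensional $F$-vector spaces. $H_B$ is a fiber functor over $\mathbb{Q}$, $H_{dR}$ a fiber functor over $K$, and $\int:H_B\otimes_{\mathbb{Q}}\mathbb{C}\to H_{dR}\otimes_K\mathbb{C}$ a natural isomorphism. $V^\vee$ is the $K$-dual; $\alpha^\vee$ is the dual of $H_{dR}(\alpha)$. $P(\mathcal{A})$ is $\bigoplus_{M}H_B(M)\otimes_{\mathbb{Q}}H_{dR}(M)^\vee$ (summand of $M$ written $(\cdot)_M$, $K$ acting on the second factor) modulo the $K$-span of all $(\sigma\otimes\alpha^\vee(\omega))_M-(H_B(\alpha)(\sigma)\otimes\omega)_N$ for morphisms $\alpha:M\to N$, $\sigma\in H_B(M)$, $\omega\in H_{dR}(N)^\vee$. For $\sigma\in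 H_B(M)$, $\omega\in H_{dR}(M)^\vee$ put $\int_\sigma\omega:=(\omega\otimes\mathrm{id}_{\mathbb{C}})(\int_M(\sigma\otimes1))\in\mathbb{C}$, and $\mathrm{eval}_\int:P(\mathcal{A})\to\mathbb{C}$ is the $K$-linear map $(\sigma\otimes\omega)_M\mapsto\int_\sigma\omega$. *)

theory Defs
  imports Complex_Main "HOL-Library.Function_Algebras" "Jordan_Normal_Form.Matrix"
begin

record ('o, 'm) qcat =
  cdom  :: "'m \<Rightarrow> 'o"
  ccod  :: "'m \<Rightarrow> 'o"
  ccomp :: "'m \<Rightarrow> 'm \<Rightarrow> 'm"        (* ccomp C g f = g o f *)
  cid   :: "'o \<Rightarrow> 'm"
  czero :: "'o \<Rightarrow> 'o \<Rightarrow> 'm"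
  cadd  :: "'m \<Rightarrow> 'm \<Rightarrow> 'm"
  csmul :: "rat \<Rightarrow> 'm \<Rightarrow> 'm"

definition hom :: "('o, 'm, 'x) qcat_scheme \<Rightarrow> 'o \<Rightarrow> 'o \<Rightarrow> 'm set" where
  "hom C X Y = {f. cdom C f = X \<and> ccod C f = Y}"

definition is_category :: "('o, 'm, 'x) qcat_scheme \<Rightarrow> bool" where
  "is_category C \<longleftrightarrow>
     (\<forall>X Y Z f g. f \<in> hom C X Y \<longrightarrow> g \<in> hom C Y Z \<longrightarrow> ccomp C g f \<in> hom C X Z) \<and>
     (\<forall>X. cid C X \<in> hom C X X) \<and>
     (\<forall>X Y f. f \<in> hom C X Y \<longrightarrow> ccomp C f (cid C X) = f \<and> ccomp C (cid C Y) f = f) \<and>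
     (\<forall>W X Y Z f g h. f \<in> hom C W X \<longrightarrow> g \<in> hom C X Y \<longrightarrow> h \<in> hom C Y Z \<longrightarrow>
        ccomp C h (ccomp C g f) = ccomp C (ccomp C h g) f)"

definition is_Qlinear :: "('o, 'm, 'x) qcat_scheme \<Rightarrow> bool" where
  "is_Qlinear C \<longleftrightarrow>
     (\<forall>X Y. czero C X Y \<in> hom C X Y \<and>
        (\<forall>f\<in>hom C X Y. \<forall>g\<in>hom C X Y. cadd C f g \<in> hom C X Y) \<and>
        (\<forall>q. \<forall>f\<in>hom C X Y. csmul C q f \<in> hom C X Y) \<and>
        (\<forall>f\<in>hom C X Y. \<forall>g\<in>hom C X Y. \<forall>h\<in>hom C X Y.
            cadd C (cadd C f g) h = cadd C f (cadd C g h)) \<and>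
        (\<forall>f\<in>hom C X Y. \<forall>g\<in>hom C X Y. cadd C f g = cadd C g f) \<and>
        (\<forall>f\<in>hom C X Y. cadd C (czero C X Y) f = f) \<and>
        (\<forall>f\<in>hom C X Y. cadd C f (csmul C (-1) f) = czero C X Y) \<and>
        (\<forall>f\<in>hom C X Y. csmul C 1 f = f) \<and>
        (\<forall>a b. \<forall>f\<in>hom C X Y. csmul C (a * b) f = csmul C a (csmul C b f)) \<and>
        (\<forall>a b. \<forall>f\<in>hom C X Y. csmul C (a + b) f = cadd C (csmul C a f) (csmul C b f)) \<and>
        (\<forall>a. \<forall>f\<in>hom C X Y. \<forall>g\<in>hom C X Y.
            csmul C a (cadd C f g) = cadd C (csmul C a f) (csmul C a g))) \<and>
     (\<forall>X Y Z. \<forall>f\<in>hom C X Y. \<forall>f'\<in>hom C X Y. \<forall>g\<in>hom C Y Z. \<forall>g'\<in>hom C Y Z.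
        ccomp C g (cadd C f f') = cadd C (ccomp C g f) (ccomp C g f') \<and>
        ccomp C (cadd C g g') f = cadd C (ccomp C g f) (ccomp C g' f) \<and>
        (\<forall>a. ccomp C g (csmul C a f) = csmul C a (ccomp C g f) \<and>
             ccomp C (csmul C a g) f = csmul C a (ccomp C g f)))"

definition is_kernel :: "('o, 'm, 'x) qcat_scheme \<Rightarrow> 'm \<Rightarrow> 'm \<Rightarrow> bool" where
  "is_kernel C k f \<longleftrightarrow>
     ccod C k = cdom C f \<and> ccomp C f k = czero C (cdom C k) (ccod C f) \<and>
     (\<forall>g. ccod C g = cdom C f \<and> ccomp C f g = czero C (cdom C g) (ccod C f) \<longrightarrow>
        (\<exists>!h. h \<in> hom C (cdom C g) (cdom C k) \<and> ccomp C k h = g))"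

definition is_cokernel :: "('o, 'm, 'x) qcat_scheme \<Rightarrow> 'm \<Rightarrow> 'm \<Rightarrow> bool" where
  "is_cokernel C c f \<longleftrightarrow>
     cdom C c = ccod C f \<and> ccomp C c f = czero C (cdom C f) (ccod C c) \<and>
     (\<forall>g. cdom C g = ccod C f \<and> ccomp C g f = czero C (cdom C f) (ccod C g) \<longrightarrow>
        (\<exists>!h. h \<in> hom C (ccod C c) (ccod C g) \<and> ccomp C h c = g))"

definition is_mono :: "('o, 'm, 'x) qcat_scheme \<Rightarrow> 'm \<Rightarrow> bool" where
  "is_mono C f \<longleftrightarrow> (\<forall>g h. ccod C g = cdom C f \<and> ccod C h = cdom C f \<and> cdom C g = cdom C h \<and>
       ccomp C f g = ccomp C f h \<longrightarrow> g = h)"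

definition is_epi :: "('o, 'm, 'x) qcat_scheme \<Rightarrow> 'm \<Rightarrow> bool" where
  "is_epi C f \<longleftrightarrow> (\<forall>g h. cdom C g = ccod C f \<and> cdom C h = ccod C f \<and> ccod C g = ccod C h \<and>
       ccomp C g f = ccomp C h f \<longrightarrow> g = h)"

definition Qlinear_abelian :: "('o, 'm, 'x) qcat_scheme \<Rightarrow> bool" where
  "Qlinear_abelian C \<longleftrightarrow> is_category C \<and> is_Qlinear C \<and>
     (\<exists>Z. \<forall>X. (\<forall>f\<in>hom C Z X. f = czero C Z X) \<and> (\<forall>f\<in>hom C X Z. f = czero C X Z)) \<and>
     (\<forall>X Y. \<exists>S i1 i2 p1 p2. i1 \<in> hom C X S \<and> i2 \<in> hom C Y S \<and> p1 \<in> hom C S X \<and> p2 \<in> hom C S Y \<and>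
        ccomp C p1 i1 = cid C X \<and> ccomp C p2 i2 = cid C Y \<and>
        ccomp C p1 i2 = czero C Y X \<and> ccomp C p2 i1 = czero C X Y \<and>
        cadd C (ccomp C i1 p1) (ccomp C i2 p2) = cid C S) \<and>
     (\<forall>f. \<exists>k. is_kernel C k f) \<and> (\<forall>f. \<exists>c. is_cokernel C c f) \<and>
     (\<forall>f. is_mono C f \<longrightarrow> (\<exists>g. is_kernel C f g)) \<and>
     (\<forall>f. is_epi C f \<longrightarrow> (\<exists>g. is_cokernel C f g))"

definition short_exact :: "('o, 'm, 'x) qcat_scheme \<Rightarrow> 'm \<Rightarrow> 'm \<Rightarrow> bool" where
  "short_exact C s p \<longleftrightarrow> is_kernel C s p \<and> is_cokernel C p s"

definition subfield_C :: "complex set \<Rightarrow> bool" where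
  "subfield_C F \<longleftrightarrow> 0 \<in> F \<and> 1 \<in> F \<and>
     (\<forall>x\<in>F. \<forall>y\<in>F. x + y \<in> F \<and> x * y \<in> F) \<and>
     (\<forall>x\<in>F. - x \<in> F \<and> (x \<noteq> 0 \<longrightarrow> inverse x \<in> F))"

definition Fvec :: "complex set \<Rightarrow> nat \<Rightarrow> complex vec set" where
  "Fvec F n = {v \<in> carrier_vec n. \<forall>i<n. v $ i \<in> F}"

definition Fmat :: "complex set \<Rightarrow> nat \<Rightarrow> nat \<Rightarrow> complex mat set" where
  "Fmat F n m = {A \<in> carrier_mat n m. \<forall>i<n. \<forall>j<m. A $$ (i, j) \<in> F}"

definition fiber_functor ::
  "('o, 'm, 'x) qcat_scheme \<Rightarrow> complex set \<Rightarrow> ('o \<Rightarrow> nat) \<Rightarrow> ('m \<Rightarrow> complex mat) \<Rightarrow> bool" where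
  "fiber_functor C F d H \<longleftrightarrow>
     (\<forall>f. H f \<in> Fmat F (d (ccod C f)) (d (cdom C f))) \<and>
     (\<forall>X. H (cid C X) = 1\<^sub>m (d X)) \<and>
     (\<forall>f g. ccod C f = cdom C g \<longrightarrow> H (ccomp C g f) = H g * H f) \<and>
     (\<forall>X Y. \<forall>f\<in>hom C X Y. \<forall>g\<in>hom C X Y. H (cadd C f g) = H f + H g) \<and>
     (\<forall>q f. H (csmul C q f) = of_rat q \<cdot>\<^sub>m H f) \<and>
     (\<forall>X Y. \<forall>f\<in>hom C X Y. \<forall>g\<in>hom C X Y. H f = H g \<longrightarrow> f = g) \<and>
     (\<forall>s p. short_exact C s p \<longrightarrow>
        (\<forall>v\<in>Fvec F (d (cdom C s)). H s *\<^sub>v v = 0\<^sub>v (d (ccod C s)) \<longrightarrow> v = 0\<^sub>v (d (cdom C s))) \<and>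
        (\<forall>w\<in>Fvec F (d (ccod C p)). \<exists>v\<in>Fvec F (d (cdom C p)). H p *\<^sub>v v = w) \<and>
        (\<forall>v\<in>Fvec F (d (cdom C p)).
           H p *\<^sub>v v = 0\<^sub>v (d (ccod C p)) \<longleftrightarrow> (\<exists>u\<in>Fvec F (d (cdom C s)). H s *\<^sub>v u = v)))"

text \<open>The comparison isomorphism int: H_B (x) C -> H_dR (x) C, natural in M; in coordinates
  int M is an invertible complex (dR M x dB M)-matrix.\<close>
definition comparison ::
  "('o, 'm, 'x) qcat_scheme \<Rightarrow> ('o \<Rightarrow> nat) \<Rightarrow> ('m \<Rightarrow> complex mat) \<Rightarrow> ('o \<Rightarrow> nat) \<Rightarrow>
   ('m \<Rightarrow> complex mat) \<Rightarrow> ('o \<Rightarrow> complex mat) \<Rightarrow> bool" where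
  "comparison C dB HB dR HdR I \<longleftrightarrow>
     (\<forall>M. I M \<in> carrier_mat (dR M) (dB M) \<and> invertible_mat (I M)) \<and>
     (\<forall>f. I (ccod C f) * HB f = HdR f * I (cdom C f))"

text \<open>Elements of H_dR(M)^dual are coordinate vectors w in K^(dR M) (acting by v |-> w . v);
  the dual map of H_dR(alpha) is multiplication by the transpose.\<close>
definition dual_map :: "complex mat \<Rightarrow> complex vec \<Rightarrow> complex vec" where
  "dual_map A w = transpose_mat A *\<^sub>v w"

text \<open>int_sigma omega = (omega (x) id_C)(int_M (sigma (x) 1)).\<close>
definition period :: "('o \<Rightarrow> complex mat) \<Rightarrow> 'o \<Rightarrow> complex vec \<Rightarrow> complex vec \<Rightarrow> complex" where
  "period I M \<sigma> \<omega> = scalar_prod \<omega> (I M *\<^sub>v \<sigma>)"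

text \<open>Elements of the direct sum over M of H_B(M) (x)_Q H_dR(M)^dual, where
  Q^b (x)_Q K^d is identified with K^(b x d) via sigma (x) omega |-> (sigma_i omega_j):
  a family of coefficient arrays indexed by objects.\<close>
definition ptensor ::
  "('o \<Rightarrow> nat) \<Rightarrow> ('o \<Rightarrow> nat) \<Rightarrow> 'o \<Rightarrow> complex vec \<Rightarrow> complex vec \<Rightarrow> 'o \<Rightarrow> nat \<Rightarrow> nat \<Rightarrow> complex" where
  "ptensor dB dR M \<sigma> \<omega> = (\<lambda>X i j. if X = M \<and> i < dB M \<and> j < dR M then \<sigma> $ i * \<omega> $ j else 0)"

definition period_relations ::
  "('o, 'm, 'x) qcat_scheme \<Rightarrow> complex set \<Rightarrow> ('o \<Rightarrow> nat) \<Rightarrow> ('m \<Rightarrow> complex mat) \<Rightarrow> ('o \<Rightarrow> nat) \<Rightarrow>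
   ('m \<Rightarrow> complex mat) \<Rightarrow> ('o \<Rightarrow> nat \<Rightarrow> nat \<Rightarrow> complex) set" where
  "period_relations C K dB HB dR HdR =
     {ptensor dB dR M \<sigma> (dual_map (HdR \<alpha>) \<omega>) - ptensor dB dR N (HB \<alpha> *\<^sub>v \<sigma>) \<omega> | M N \<alpha> \<sigma> \<omega>.
        \<alpha> \<in> hom C M N \<and> \<sigma> \<in> Fvec \<rat> (dB M) \<and> \<omega> \<in> Fvec K (dR N)}"

definition Kspan :: "complex set \<Rightarrow> ('o \<Rightarrow> nat \<Rightarrow> nat \<Rightarrow> complex) set \<Rightarrow> ('o \<Rightarrow> nat \<Rightarrow> nat \<Rightarrow> complex) set" where
  "Kspan K S = {sum_list (map (\<lambda>(c, r). (\<lambda>X i j. c * r X i j)) L) | L. set L \<subseteq> K \<times> S}"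

text \<open>Injectivity of eval_int : P(A) -> C, i.e. every element
  sum_k (sigma_k (x) omega_k)_(M_k) of the direct sum with sum_k int_(sigma_k) omega_k = 0
  lies in the K-span of the relations.\<close>
definition period_conjecture ::
  "('o, 'm, 'x) qcat_scheme \<Rightarrow> complex set \<Rightarrow> ('o \<Rightarrow> nat) \<Rightarrow> ('m \<Rightarrow> complex mat) \<Rightarrow> ('o \<Rightarrow> nat) \<Rightarrow>
   ('m \<Rightarrow> complex mat) \<Rightarrow> ('o \<Rightarrow> complex mat) \<Rightarrow> bool" where
  "period_conjecture C K dB HB dR HdR I \<longleftrightarrow>
     (\<forall>L :: ('o \<times> complex vec \<times> complex vec) list.
        (\<forall>(M, \<sigma>, \<omega>) \<in> set L. \<sigma> \<in> Fvec \<rat> (dB M) \<and> \<omega> \<in> Fvec K (dR M)) \<longrightarrow>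
        sum_list (map (\<lambda>(M, \<sigma>, \<omega>). period I M \<sigma> \<omega>) L) = 0 \<longrightarrow>
        sum_list (map (\<lambda>(M, \<sigma>, \<omega>). ptensor dB dR M \<sigma> \<omega>) L)
          \<in> Kspan K (period_relations C K dB HB dR HdR))"

end

(*
  (B) implies (A): with binary biproducts, every element of the direct sum is congruent modulo
  the relations to a single pure tensor (sigma (x) omega)_S with the same period.  If that period
  vanishes, (B) writes sigma = H_B(s) tau and omega = p^dual eta with p s = 0, and the relation
  attached to s, tau and p^dual eta shows that (sigma (x) omega)_S is itself a relation.

  (A) implies (B): if (sigma (x) omega)_M is a combination of relations, realise all objects
  involved as retracts of one object X, so that the relations only involve endomorphisms e of X.
  For every matrix L commuting with all H_B(e), the twisted comparison maps
  I_Z H_B(rho_Z) L H_B(iota_Z) are natural along the relations, hence the functional they induce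
  kills the relations and omega(I_M H_B(rho_M) L H_B(iota_M) sigma) = 0.  These matrices L are
  parametrised by H_B(G) for an object G (a joint kernel in X^n, n = dim H_B(X)), so the vectors
  H_B(rho_M) L H_B(iota_M) sigma fill out H_B(N') for the image N' of a morphism G -> M.  Then sigma
  lies in H_B(N'), omega vanishes on I_M(H_B(N')), which spans H_dR(N') (x) C, and exactness of
  H_dR on 0 -> N' -> M -> M/N' -> 0 gives omega = p^dual eta.
*)
theory Submission
  imports Defs
begin

section \<open>Vectors and matrices over a subfield of \<open>\<complex>\<close>\<close>

lemma sum_list_map_zero: "(\<And>x. x \<in> set xs \<Longrightarrow> f x = (0::'a::monoid_add)) \<Longrightarrow> sum_list (map f xs) = 0"
  by (induction xs) auto

definition rat_of :: "complex \<Rightarrow> rat" where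
  "rat_of c = (SOME q. of_rat q = c)"

lemma rat_of: "c \<in> \<rat> \<Longrightarrow> of_rat (rat_of c) = c"
  unfolding rat_of_def by (rule someI_ex) (auto elim: Rats_cases)

lemma mult_mat_vec_index_sum: "A \<in> carrier_mat n m \<Longrightarrow> v \<in> carrier_vec m \<Longrightarrow> i < n \<Longrightarrow>
  (A *\<^sub>v v) $ i = (\<Sum>k<m. A $$ (i, k) * v $ k)"
  by (simp add: scalar_prod_def atLeast0LessThan)

lemma zero_mat_mult_vec[simp]: "v \<in> carrier_vec m \<Longrightarrow> 0\<^sub>m n m *\<^sub>v v = (0\<^sub>v n :: 'a::semiring_0 vec)"
  by (auto intro!: eq_vecI simp: scalar_prod_def)

lemma mult_vec_zero[simp]: "A \<in> carrier_mat n m \<Longrightarrow> A *\<^sub>v 0\<^sub>v m = (0\<^sub>v n :: 'a::semiring_0 vec)"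
  by (auto intro!: eq_vecI simp: scalar_prod_def)

lemma subfield_sum: assumes "subfield_C F" "finite S" "\<And>i. i \<in> S \<Longrightarrow> f i \<in> F"
  shows "sum f S \<in> F"
  using assms(2,3)
proof (induction S rule: finite_induct)
  case empty then show ?case using assms(1) unfolding subfield_C_def by simp
next
  case (insert x S) then show ?case using assms(1) unfolding subfield_C_def by simp
qed

lemma subfield_mult: "subfield_C F \<Longrightarrow> a \<in> F \<Longrightarrow> b \<in> F \<Longrightarrow> a * b \<in> F"
  unfolding subfield_C_def by simp
lemma subfield_add: "subfield_C F \<Longrightarrow> a \<in> F \<Longrightarrow> b \<in> F \<Longrightarrow> a + b \<in> F"
  unfolding subfield_C_def by simp
lemma subfield_uminus: "subfield_C F \<Longrightarrow> a \<in> F \<Longrightarrow> - a \<in> F"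
  unfolding subfield_C_def by simp
lemma subfield_1: "subfield_C F \<Longrightarrow> 1 \<in> F" unfolding subfield_C_def by simp

lemma subfield_Rats: "subfield_C \<rat>"
  unfolding subfield_C_def by auto

lemma Fvec_carrier: "v \<in> Fvec F n \<Longrightarrow> v \<in> carrier_vec n" unfolding Fvec_def by simp
lemma Fmat_carrier: "A \<in> Fmat F n m \<Longrightarrow> A \<in> carrier_mat n m" unfolding Fmat_def by simp

lemma Fmat_mult_vec: assumes F: "subfield_C F" and A: "A \<in> Fmat F n m" and v: "v \<in> Fvec F m"
  shows "A *\<^sub>v v \<in> Fvec F n"
proof -
  have Ac: "A \<in> carrier_mat n m" and vc: "v \<in> carrier_vec m" using A v unfolding Fmat_def Fvec_def by auto
  have "(A *\<^sub>v v) $ i \<in> F" if i: "i < n" for i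
  proof -
    have "(A *\<^sub>v v) $ i = (\<Sum>j\<in>{0..<m}. A $$ (i,j) * v $ j)"
      using Ac vc i by (simp add: scalar_prod_def)
    also have "\<dots> \<in> F" using A v i F unfolding Fmat_def Fvec_def
      by (intro subfield_sum[OF F]) (auto intro!: subfield_mult[OF F])
    finally show ?thesis .
  qed
  thus ?thesis using Ac vc unfolding Fvec_def by auto
qed

lemma zero_Fvec: "subfield_C F \<Longrightarrow> 0\<^sub>v n \<in> Fvec F n"
  unfolding Fvec_def subfield_C_def by auto

lemma unit_Fvec: "subfield_C F \<Longrightarrow> i < n \<Longrightarrow> unit_vec n i \<in> Fvec F n"
  unfolding Fvec_def subfield_C_def by (auto simp: unit_vec_def)

lemma Fmat_transpose: "A \<in> Fmat F n m \<Longrightarrow> transpose_mat A \<in> Fmat F m n"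
  unfolding Fmat_def by auto

lemma Fvec_add: "subfield_C F \<Longrightarrow> u \<in> Fvec F n \<Longrightarrow> v \<in> Fvec F n \<Longrightarrow> u + v \<in> Fvec F n"
  unfolding Fvec_def subfield_C_def by auto

lemma Fvec_minus:
  assumes F: "subfield_C F" and u: "u \<in> Fvec F n" and v: "v \<in> Fvec F n"
  shows "u - v \<in> Fvec F n"
proof -
  have "u $ i - v $ i \<in> F" if "i < n" for i
  proof -
    have "u $ i \<in> F" "v $ i \<in> F" using that u v unfolding Fvec_def by auto
    then have "u $ i + - (v $ i) \<in> F" using subfield_add[OF F] subfield_uminus[OF F] by blast
    then show ?thesis by (simp only: diff_conv_add_uminus)
  qed
  then show ?thesis using u v unfolding Fvec_def by auto
qed

lemma invertible_mat_mult_vec_surj: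
  assumes A: "A \<in> carrier_mat n n" "invertible_mat A" and w: "w \<in> carrier_vec n"
  obtains z where "z \<in> carrier_vec n" "A *\<^sub>v z = w"
proof -
  obtain B where B: "inverts_mat A B" "inverts_mat B A"
    using A(2) unfolding invertible_mat_def by blast
  have AB: "A * B = 1\<^sub>m n" using B(1) A(1) unfolding inverts_mat_def by simp
  have "dim_col B = n" using arg_cong[OF AB, of dim_col] by simp
  moreover have "dim_col (B * A) = dim_row B"
    using B(2) unfolding inverts_mat_def by (metis index_one_mat(3))
  then have "dim_row B = n" using A(1) by simp
  ultimately have Bc: "B \<in> carrier_mat n n" by auto
  show ?thesis
  proof (rule that[of "B *\<^sub>v w"])
    show "B *\<^sub>v w \<in> carrier_vec n" using mult_mat_vec_carrier[OF Bc w] .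
    show "A *\<^sub>v (B *\<^sub>v w) = w" using assoc_mult_mat_vec[OF A(1) Bc w] AB w by simp
  qed
qed

lemma scalar_prod_mult_mat_vec_eq_0:
  fixes A :: "'a :: comm_semiring_1 mat"
  assumes A: "A \<in> carrier_mat n m" and \<omega>: "\<omega> \<in> carrier_vec n"
    and units: "\<And>k. k < m \<Longrightarrow> \<omega> \<bullet> (A *\<^sub>v unit_vec m k) = 0" and z: "z \<in> carrier_vec m"
  shows "\<omega> \<bullet> (A *\<^sub>v z) = 0"
proof -
  have "transpose_mat A *\<^sub>v \<omega> = 0\<^sub>v m"
  proof (rule eq_vecI)
    fix k assume "k < dim_vec (0\<^sub>v m :: 'a vec)"
    then have k: "k < m" by simp
    have "(transpose_mat A *\<^sub>v \<omega>) $ k = (transpose_mat A *\<^sub>v \<omega>) \<bullet> unit_vec m k"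
      by (simp only: scalar_prod_right_unit[OF k])
    also have "\<dots> = \<omega> \<bullet> (A *\<^sub>v unit_vec m k)"
      by (rule transpose_vec_mult_scalar[OF A _ \<omega>]) (use k in simp)
    finally show "(transpose_mat A *\<^sub>v \<omega>) $ k = 0\<^sub>v m $ k" using units[OF k] k by simp
  qed (use A in simp)
  then show ?thesis
    using transpose_vec_mult_scalar[OF A z \<omega>] z by simp
qed

lemma Fmat_right_inverse:
  assumes P: "P \<in> carrier_mat n m"
    and surj: "\<And>l. l < n \<Longrightarrow> \<exists>v\<in>Fvec F m. P *\<^sub>v v = unit_vec n l"
  obtains R where "R \<in> Fmat F m n" "P * R = 1\<^sub>m n"
proof -
  define v where "v l = (SOME v. v \<in> Fvec F m \<and> P *\<^sub>v v = unit_vec n l)" for l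
  have v: "v l \<in> Fvec F m" "P *\<^sub>v v l = unit_vec n l" if "l < n" for l
    using someI_ex[OF surj[OF that, unfolded Bex_def]] unfolding v_def by auto
  define R where "R = mat m n (\<lambda>(i, l). v l $ i)"
  have col: "col R l = v l" if "l < n" for l
    using that v(1)[OF that] unfolding R_def Fvec_def by (auto intro!: eq_vecI)
  show ?thesis
  proof (rule that[of R])
    show "R \<in> Fmat F m n" using v(1) unfolding R_def Fmat_def Fvec_def by auto
    show "P * R = 1\<^sub>m n"
    proof (rule eq_matI)
      fix i j assume "i < dim_row (1\<^sub>m n :: complex mat)" "j < dim_col (1\<^sub>m n :: complex mat)"
      then have ij: "i < n" "j < n" by auto
      have "(P * R) $$ (i, j) = row P i \<bullet> col R j" using P ij by (simp add: R_def)
      also have "\<dots> = (P *\<^sub>v v j) $ i" using P ij col by simp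
      finally show "(P * R) $$ (i, j) = 1\<^sub>m n $$ (i, j)" using v(2) ij by simp
    qed (use P in \<open>auto simp: R_def\<close>)
  qed
qed

text \<open>A functional vanishing on the kernel of a surjection \<open>P : F\<^sup>m \<rightarrow> F\<^sup>n\<close> factors through \<open>P\<close>:
  with a right inverse \<open>R\<close>, every \<open>e\<close> differs from \<open>R P e\<close> by an element of the kernel.\<close>
lemma transpose_mult_vec_if_orthogonal_kernel:
  assumes F: "subfield_C F" and P: "P \<in> Fmat F n m"
    and surj: "\<And>l. l < n \<Longrightarrow> \<exists>v\<in>Fvec F m. P *\<^sub>v v = unit_vec n l"
    and \<omega>: "\<omega> \<in> Fvec F m" and ker: "\<And>x. x \<in> Fvec F m \<Longrightarrow> P *\<^sub>v x = 0\<^sub>v n \<Longrightarrow> \<omega> \<bullet> x = 0"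
  shows "\<exists>\<eta>\<in>Fvec F n. \<omega> = transpose_mat P *\<^sub>v \<eta>"
proof -
  have Pc: "P \<in> carrier_mat n m" and \<omega>c: "\<omega> \<in> carrier_vec m"
    using P \<omega> by (simp_all add: Fmat_carrier Fvec_carrier)
  obtain R where R: "R \<in> Fmat F m n" "P * R = 1\<^sub>m n" using Fmat_right_inverse[OF Pc surj] by blast
  have Rc: "R \<in> carrier_mat m n" using Fmat_carrier[OF R(1)] .
  have retract: "\<omega> \<bullet> e = \<omega> \<bullet> (R *\<^sub>v (P *\<^sub>v e))" if e: "e \<in> Fvec F m" for e
  proof -
    have ec: "e \<in> carrier_vec m" using Fvec_carrier[OF e] .
    have RPe: "R *\<^sub>v (P *\<^sub>v e) \<in> Fvec F m" by (rule Fmat_mult_vec[OF F R(1) Fmat_mult_vec[OF F P e]])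
    have "P *\<^sub>v (e - R *\<^sub>v (P *\<^sub>v e)) = P *\<^sub>v e - (P * R) *\<^sub>v (P *\<^sub>v e)"
      using Pc Rc ec by (simp add: mult_minus_distrib_mat_vec assoc_mult_mat_vec)
    then have "P *\<^sub>v (e - R *\<^sub>v (P *\<^sub>v e)) = 0\<^sub>v n" using R(2) Pc ec by simp
    with Fvec_minus[OF F e RPe] have "\<omega> \<bullet> (e - R *\<^sub>v (P *\<^sub>v e)) = 0" by (rule ker)
    then show ?thesis using \<omega>c ec Rc Pc by (simp add: scalar_prod_minus_distrib)
  qed
  have "\<omega> $ j = (transpose_mat P *\<^sub>v (transpose_mat R *\<^sub>v \<omega>)) $ j" if j: "j < m" for j
  proof -
    have "(transpose_mat P *\<^sub>v (transpose_mat R *\<^sub>v \<omega>)) \<bullet> unit_vec m j =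
        (transpose_mat R *\<^sub>v \<omega>) \<bullet> (P *\<^sub>v unit_vec m j)"
      by (rule transpose_vec_mult_scalar) (use Pc Rc \<omega>c j in auto)
    also have "\<dots> = \<omega> \<bullet> (R *\<^sub>v (P *\<^sub>v unit_vec m j))"
      by (rule transpose_vec_mult_scalar) (use Pc Rc \<omega>c in auto)
    also have "\<dots> = \<omega> $ j" using retract[OF unit_Fvec[OF F j]] \<omega>c j by simp
    finally show ?thesis using j by simp
  qed
  then have "\<omega> = transpose_mat P *\<^sub>v (transpose_mat R *\<^sub>v \<omega>)"
    using Pc Rc \<omega>c by (intro eq_vecI) auto
  moreover have "transpose_mat R *\<^sub>v \<omega> \<in> Fvec F n"
    by (rule Fmat_mult_vec[OF F Fmat_transpose[OF R(1)] \<omega>])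
  ultimately show ?thesis by blast
qed

lemma mat_eq_zero_if_double: fixes A :: "complex mat" assumes c: "A \<in> carrier_mat n m" and e: "A = A + A"
  shows "A = 0\<^sub>m n m"
proof (rule eq_matI)
  fix i j assume ij: "i < dim_row (0\<^sub>m n m :: complex mat)" "j < dim_col (0\<^sub>m n m :: complex mat)"
  have "A $$ (i,j) = (A + A) $$ (i,j)" using arg_cong[OF e, of "\<lambda>A. A $$ (i,j)"] .
  also have "\<dots> = A $$ (i,j) + A $$ (i,j)" using c ij by simp
  finally have "A $$ (i,j) = 0" by (rule add_cancel_right_right[THEN iffD1])
  thus "A $$ (i,j) = 0\<^sub>m n m $$ (i,j)" using ij by simp
next
  show "dim_row A = dim_row (0\<^sub>m n m :: complex mat)" using c by simp
  show "dim_col A = dim_col (0\<^sub>m n m :: complex mat)" using c by simp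
qed

section \<open>\<open>\<rat>\<close>-linear abelian categories\<close>

locale qlinear_abelian_cat =
  fixes C :: "('o, 'm) qcat"
  assumes qab: "Qlinear_abelian C"
begin

abbreviation "dm \<equiv> cdom C"
abbreviation "cd \<equiv> ccod C"
abbreviation "cmp \<equiv> ccomp C"
abbreviation "zr \<equiv> czero C"
abbreviation "ad \<equiv> cadd C"
abbreviation "ng f \<equiv> csmul C (-1) f"

lemma cat: "is_category C" and lin: "is_Qlinear C"
  using qab unfolding Qlinear_abelian_def by auto

lemma hom_iff: "f \<in> hom C X Y \<longleftrightarrow> dm f = X \<and> cd f = Y"
  unfolding hom_def by auto

lemma in_hom[simp]: "f \<in> hom C (dm f) (cd f)" by (simp add: hom_iff)

lemma comp_hom: "f \<in> hom C X Y \<Longrightarrow> g \<in> hom C Y Z \<Longrightarrow> cmp g f \<in> hom C X Z"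
  using cat unfolding is_category_def by blast

lemma dom_comp[simp]: "cd f = dm g \<Longrightarrow> dm (cmp g f) = dm f"
  using comp_hom[of f "dm f" "cd f" g "cd g"] by (simp add: hom_iff)
lemma cod_comp[simp]: "cd f = dm g \<Longrightarrow> cd (cmp g f) = cd g"
  using comp_hom[of f "dm f" "cd f" g "cd g"] by (simp add: hom_iff)

lemma id_hom: "cid C X \<in> hom C X X" using cat unfolding is_category_def by blast
lemma dom_id[simp]: "dm (cid C X) = X" and cod_id[simp]: "cd (cid C X) = X"
  using id_hom[of X] by (auto simp: hom_iff)

lemma comp_id_right[simp]: "cmp f (cid C (dm f)) = f"
  using cat unfolding is_category_def by (meson in_hom)
lemma comp_id_left[simp]: "cmp (cid C (cd f)) f = f"
  using cat unfolding is_category_def by (meson in_hom)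

lemma comp_assoc: "cd f = dm g \<Longrightarrow> cd g = dm h \<Longrightarrow>
   cmp h (cmp g f) = cmp (cmp h g) f"
  using cat unfolding is_category_def by (metis in_hom)

lemma zero_hom: "zr X Y \<in> hom C X Y" using lin unfolding is_Qlinear_def by simp
lemma dom_zero[simp]: "dm (zr X Y) = X" and cod_zero[simp]: "cd (zr X Y) = Y"
  using zero_hom[of X Y] by (auto simp: hom_iff)

lemma add_hom: "f \<in> hom C X Y \<Longrightarrow> g \<in> hom C X Y \<Longrightarrow> ad f g \<in> hom C X Y"
  using lin unfolding is_Qlinear_def by simp
lemma smul_hom: "f \<in> hom C X Y \<Longrightarrow> csmul C q f \<in> hom C X Y"
  using lin unfolding is_Qlinear_def by simp

lemma add_assoc: "f \<in> hom C X Y \<Longrightarrow> g \<in> hom C X Y \<Longrightarrow> h \<in> hom C X Y \<Longrightarrow>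
   ad (ad f g) h = ad f (ad g h)"
  using lin unfolding is_Qlinear_def by simp
lemma add_comm: "f \<in> hom C X Y \<Longrightarrow> g \<in> hom C X Y \<Longrightarrow> ad f g = ad g f"
  using lin unfolding is_Qlinear_def by simp
lemma add_zero_left: "f \<in> hom C X Y \<Longrightarrow> ad (zr X Y) f = f"
  using lin unfolding is_Qlinear_def by simp
lemma add_neg: "f \<in> hom C X Y \<Longrightarrow> ad f (ng f) = zr X Y"
  using lin unfolding is_Qlinear_def by simp
lemma add_zero_right: "f \<in> hom C X Y \<Longrightarrow> ad f (zr X Y) = f"
  using add_zero_left add_comm zero_hom by metis

lemma comp_add_right: "f \<in> hom C X Y \<Longrightarrow> f' \<in> hom C X Y \<Longrightarrow> g \<in> hom C Y Z \<Longrightarrow>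
   cmp g (ad f f') = ad (cmp g f) (cmp g f')"
  using lin unfolding is_Qlinear_def by simp
lemma comp_add_left: "f \<in> hom C X Y \<Longrightarrow> g \<in> hom C Y Z \<Longrightarrow> g' \<in> hom C Y Z \<Longrightarrow>
   cmp (ad g g') f = ad (cmp g f) (cmp g' f)"
  using lin unfolding is_Qlinear_def by simp
lemma comp_smul_right: "f \<in> hom C X Y \<Longrightarrow> g \<in> hom C Y Z \<Longrightarrow>
   cmp g (csmul C a f) = csmul C a (cmp g f)"
  using lin unfolding is_Qlinear_def by simp
lemma add_eq_self_zero:
  assumes f: "f \<in> hom C X Y" and g: "g \<in> hom C X Y" and e: "ad f g = f"
  shows "g = zr X Y"
proof -
  have nf: "ng f \<in> hom C X Y" by (rule smul_hom[OF f])
  have "g = ad (zr X Y) g" using add_zero_left[OF g] by simp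
  also have "\<dots> = ad (ad (ng f) f) g" using add_neg[OF f] add_comm[OF f nf] by simp
  also have "\<dots> = ad (ng f) (ad f g)" using add_assoc[OF nf f g] .
  also have "\<dots> = ad (ng f) f" using e by simp
  also have "\<dots> = zr X Y" using add_neg[OF f] add_comm[OF f nf] by simp
  finally show ?thesis .
qed

lemma eq_if_add_neg_zero:
  assumes f: "f \<in> hom C X Y" and g: "g \<in> hom C X Y" and e: "ad f (ng g) = zr X Y"
  shows "f = g"
proof -
  have ng: "ng g \<in> hom C X Y" by (rule smul_hom[OF g])
  have "f = ad f (zr X Y)" using add_zero_right[OF f] by simp
  also have "\<dots> = ad f (ad (ng g) g)" using add_neg[OF g] add_comm[OF g ng] by simp
  also have "\<dots> = ad (ad f (ng g)) g" using add_assoc[OF f ng g] by simp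
  also have "\<dots> = g" using e add_zero_left[OF g] by simp
  finally show ?thesis .
qed

lemma add_zero_zero: "ad (zr X Y) (zr X Y) = zr X Y"
  using add_zero_left zero_hom by blast

lemma comp_zero_right:
  assumes g: "g \<in> hom C Y Z" shows "cmp g (zr X Y) = zr X Z"
proof -
  have h: "cmp g (zr X Y) \<in> hom C X Z" using comp_hom[OF zero_hom g] .
  have "ad (cmp g (zr X Y)) (cmp g (zr X Y)) = cmp g (zr X Y)"
    using comp_add_right[OF zero_hom zero_hom g, of X] add_zero_zero by simp
  thus ?thesis using add_eq_self_zero[OF h h] by simp
qed

lemma comp_zero_left:
  assumes f: "f \<in> hom C X Y" shows "cmp (zr Y Z) f = zr X Z"
proof -
  have h: "cmp (zr Y Z) f \<in> hom C X Z" using comp_hom[OF f zero_hom] .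
  have "ad (cmp (zr Y Z) f) (cmp (zr Y Z) f) = cmp (zr Y Z) f"
    using comp_add_left[OF f zero_hom zero_hom, of Z] add_zero_zero by simp
  thus ?thesis using add_eq_self_zero[OF h h] by simp
qed

lemma comp_zero_right': "dm g = Y \<Longrightarrow> cmp g (zr X Y) = zr X (cd g)"
  using comp_zero_right[of g Y "cd g"] by (simp add: hom_iff)
lemma comp_zero_left': "cd f = Y \<Longrightarrow> cmp (zr Y Z) f = zr (dm f) Z"
  using comp_zero_left[of f "dm f" Y] by (simp add: hom_iff)

lemma monoI_zero:
  assumes "\<And>u. cd u = dm m \<Longrightarrow> cmp m u = zr (dm u) (cd m) \<Longrightarrow> u = zr (dm u) (dm m)"
  shows "is_mono C m"
  unfolding is_mono_def
proof (intro allI impI)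
  fix g h assume a: "cd g = dm m \<and> cd h = dm m \<and> dm g = dm h \<and> cmp m g = cmp m h"
  let ?X = "dm g" let ?Y = "dm m" let ?Z = "cd m"
  have g: "g \<in> hom C ?X ?Y" and h: "h \<in> hom C ?X ?Y" using a by (auto simp: hom_iff)
  have m: "m \<in> hom C ?Y ?Z" by simp
  have nh: "ng h \<in> hom C ?X ?Y" using smul_hom[OF h] .
  have u: "ad g (ng h) \<in> hom C ?X ?Y" using add_hom[OF g nh] .
  have "cmp m (ad g (ng h)) = ad (cmp m g) (ng (cmp m h))"
    using comp_add_right[OF g nh m] comp_smul_right[OF h m] by simp
  also have "\<dots> = zr ?X ?Z" using a add_neg[OF comp_hom[OF h m]] by simp
  finally have "ad g (ng h) = zr ?X ?Y" using assms[of "ad g (ng h)"] u by (simp add: hom_iff)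
  thus "g = h" using eq_if_add_neg_zero[OF g h] by simp
qed

lemma kernel_mono: assumes k: "is_kernel C k f" shows "is_mono C k"
  unfolding is_mono_def
proof (intro allI impI)
  fix g h assume a: "cd g = dm k \<and> cd h = dm k \<and> dm g = dm h \<and> cmp k g = cmp k h"
  have kf: "cd k = dm f" "cmp f k = zr (dm k) (cd f)" using k unfolding is_kernel_def by auto
  let ?g = "cmp k g"
  have c1: "cd ?g = dm f" using a kf by simp
  have c2: "cmp f ?g = zr (dm ?g) (cd f)"
    using a kf comp_assoc[of g k f] comp_zero_left'[of g] by simp
  have "\<exists>!x. x \<in> hom C (dm ?g) (dm k) \<and> cmp k x = ?g"
    using k c1 c2 unfolding is_kernel_def by blast
  then obtain x where x: "\<And>y. y \<in> hom C (dm ?g) (dm k) \<Longrightarrow> cmp k y = ?g \<Longrightarrow> y = x"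
    by blast
  have "g \<in> hom C (dm ?g) (dm k)" "h \<in> hom C (dm ?g) (dm k)"
    using a by (auto simp: hom_iff)
  then show "g = h" using x a by metis
qed

lemma cokernel_epi: assumes c: "is_cokernel C c f" shows "is_epi C c"
  unfolding is_epi_def
proof (intro allI impI)
  fix g h assume a: "dm g = cd c \<and> dm h = cd c \<and> cd g = cd h \<and> cmp g c = cmp h c"
  have cf: "dm c = cd f" "cmp c f = zr (dm f) (cd c)" using c unfolding is_cokernel_def by auto
  let ?g = "cmp g c"
  have c1: "dm ?g = cd f" using a cf by simp
  have c2: "cmp ?g f = zr (dm f) (cd ?g)"
    using a cf comp_assoc[of f c g] comp_zero_right'[of g] by simp
  have "\<exists>!x. x \<in> hom C (cd c) (cd ?g) \<and> cmp x c = ?g"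
    using c c1 c2 unfolding is_cokernel_def by blast
  then obtain x where x: "\<And>y. y \<in> hom C (cd c) (cd ?g) \<Longrightarrow> cmp y c = ?g \<Longrightarrow> y = x"
    by blast
  have "g \<in> hom C (cd c) (cd ?g)" "h \<in> hom C (cd c) (cd ?g)"
    using a by (auto simp: hom_iff)
  then show "g = h" using x a by metis
qed

lemma kernelD: assumes "is_kernel C k f" shows "cd k = dm f" "cmp f k = zr (dm k) (cd f)"
  using assms unfolding is_kernel_def by auto
lemma kernel_factor: assumes "is_kernel C k f" "cd g = dm f" "cmp f g = zr (dm g) (cd f)"
  obtains h where "h \<in> hom C (dm g) (dm k)" "cmp k h = g"
  using assms unfolding is_kernel_def by metis
lemma cokernelD: assumes "is_cokernel C c f" shows "dm c = cd f" "cmp c f = zr (dm f) (cd c)"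
  using assms unfolding is_cokernel_def by auto
lemma cokernel_factor: assumes "is_cokernel C c f" "dm g = cd f" "cmp g f = zr (dm f) (cd g)"
  obtains h where "h \<in> hom C (cd c) (cd g)" "cmp h c = g"
  using assms unfolding is_cokernel_def by metis

lemma ex_kernel: "\<exists>k. is_kernel C k f" using qab unfolding Qlinear_abelian_def by blast
lemma ex_cokernel: "\<exists>c. is_cokernel C c f" using qab unfolding Qlinear_abelian_def by blast
lemma mono_kernel: "is_mono C f \<Longrightarrow> \<exists>g. is_kernel C f g" using qab unfolding Qlinear_abelian_def by blast
lemma epi_cokernel: "is_epi C f \<Longrightarrow> \<exists>g. is_cokernel C f g" using qab unfolding Qlinear_abelian_def by blast

lemma short_exact_mono_cokernel: assumes s: "is_mono C s" and c: "is_cokernel C c s" shows "short_exact C s c"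
proof -
  obtain g where g: "is_kernel C s g" using mono_kernel[OF s] by blast
  note gD = kernelD[OF g] and cD = cokernelD[OF c]
  obtain h where h: "h \<in> hom C (cd c) (cd g)" "cmp h c = g"
    using cokernel_factor[OF c, of g] gD cD by (auto simp: comp_zero_right')
  have "is_kernel C s c" unfolding is_kernel_def
  proof (intro conjI allI impI)
    show "cd s = dm c" using cD by simp
    show "cmp c s = zr (dm s) (cd c)" using cD by simp
    fix t assume t: "cd t = dm c \<and> cmp c t = zr (dm t) (cd c)"
    have hc: "dm h = cd c" "cd h = cd g" using h by (auto simp: hom_iff)
    have "cmp g t = cmp h (cmp c t)" using h(2)[symmetric] comp_assoc[of t c h] t hc by simp
    also have "\<dots> = zr (dm t) (cd g)" using t hc comp_zero_right' by simp
    finally have gt: "cmp g t = zr (dm t) (cd g)" .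
    have ct: "cd t = dm g" using t gD cD by simp
    show "\<exists>!x. x \<in> hom C (dm t) (dm s) \<and> cmp s x = t"
      using g ct gt unfolding is_kernel_def by blast
  qed
  thus ?thesis using c unfolding short_exact_def by simp
qed

lemma short_exact_kernel_epi: assumes p: "is_epi C p" and k: "is_kernel C k p" shows "short_exact C k p"
proof -
  obtain f where f: "is_cokernel C p f" using epi_cokernel[OF p] by blast
  note fD = cokernelD[OF f] and kD = kernelD[OF k]
  obtain h where h: "h \<in> hom C (dm f) (dm k)" "cmp k h = f"
    using kernel_factor[OF k, of f] fD kD by (auto simp: comp_zero_left')
  have "is_cokernel C p k" unfolding is_cokernel_def
  proof (intro conjI allI impI)
    show "dm p = cd k" using kD by simp
    show "cmp p k = zr (dm k) (cd p)" using kD by simp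
    fix t assume t: "dm t = cd k \<and> cmp t k = zr (dm k) (cd t)"
    have hc: "dm h = dm f" "cd h = dm k" using h by (auto simp: hom_iff)
    have "cmp t f = cmp (cmp t k) h" using h(2)[symmetric] comp_assoc[of h k t] t hc by simp
    also have "\<dots> = zr (dm f) (cd t)" using t hc comp_zero_left' by simp
    finally have ft: "cmp t f = zr (dm f) (cd t)" .
    have ct: "dm t = cd f" using t fD kD by simp
    show "\<exists>!x. x \<in> hom C (cd p) (cd t) \<and> cmp x p = t"
      using f ct ft unfolding is_cokernel_def by blast
  qed
  thus ?thesis using k unfolding short_exact_def by simp
qed

lemma epi_comp: assumes p: "is_epi C p" and q: "is_epi C q" and pq: "cd p = dm q"
  shows "is_epi C (cmp q p)"
  unfolding is_epi_def
proof (intro allI impI)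
  fix g h assume a: "dm g = cd (cmp q p) \<and> dm h = cd (cmp q p) \<and> cd g = cd h \<and> cmp g (cmp q p) = cmp h (cmp q p)"
  have a': "dm g = cd q" "dm h = cd q" using a pq by auto
  have "cmp (cmp g q) p = cmp (cmp h q) p" using a a' comp_assoc[of p q g] comp_assoc[of p q h] pq by simp
  hence "cmp g q = cmp h q" using p a a' pq unfolding is_epi_def by simp
  thus "g = h" using q a a' unfolding is_epi_def by simp
qed

text \<open>If \<open>h\<close> factors through an epimorphism \<open>q\<close> out of its coimage \<open>c\<close>, then \<open>q\<close> is a split mono:
  \<open>q c\<close> is the cokernel of its own kernel \<open>l\<close>, and \<open>c\<close> kills \<open>l\<close> because \<open>l\<close> factors
  through the kernel of \<open>h\<close>.\<close>
lemma coimage_epi_factor_split: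
  assumes k: "is_kernel C k h" and c: "is_cokernel C c k"
    and q: "is_epi C q" "cd c = dm q" and m: "cd q = dm m" "cmp m (cmp q c) = h"
  obtains y where "dm y = cd q" "cd y = cd c" "cmp y q = cid C (cd c)"
proof -
  note kD = kernelD[OF k] and cD = cokernelD[OF c]
  let ?qc = "cmp q c"
  have cepi: "is_epi C c" using cokernel_epi[OF c] .
  obtain l where l: "is_kernel C l ?qc" using ex_kernel by blast
  have lcok: "is_cokernel C ?qc l"
    using short_exact_kernel_epi[OF epi_comp[OF cepi q] l] unfolding short_exact_def by simp
  note lD = kernelD[OF l]
  have dqc: "dm ?qc = dm c" "cd ?qc = cd q" using q(2) by auto
  have "cmp h l = cmp m (cmp ?qc l)"
    using m(2)[symmetric] comp_assoc[of l ?qc m] lD dqc m(1) by simp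
  also have "\<dots> = zr (dm l) (cd h)" using lD dqc m comp_zero_right'[of m] by auto
  finally have hl: "cmp h l = zr (dm l) (cd h)" .
  have lh: "cd l = dm h" using lD dqc cD kD by simp
  obtain l' where l': "l' \<in> hom C (dm l) (dm k)" "cmp k l' = l"
    using kernel_factor[OF k lh hl] .
  have l'c: "dm l' = dm l" "cd l' = dm k" using l' by (auto simp: hom_iff)
  have "cmp c l = cmp (cmp c k) l'" using l'(2)[symmetric] comp_assoc[of l' k c] l'c cD by simp
  also have "\<dots> = zr (dm l) (cd c)" using cD l'c comp_zero_left' by simp
  finally have cl: "cmp c l = zr (dm l) (cd c)" .
  obtain y where y: "y \<in> hom C (cd ?qc) (cd c)" "cmp y ?qc = c"
    using cokernel_factor[OF lcok, of c] cl lD dqc by auto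
  have yc: "dm y = cd q" "cd y = cd c" using y dqc by (auto simp: hom_iff)
  have "cmp (cmp y q) c = cmp (cid C (cd c)) c"
    using y(2) comp_assoc[of c q y] q(2) yc comp_id_left[of c] by simp
  then have "cmp y q = cid C (cd c)"
    using cepi yc q(2) unfolding is_epi_def by simp
  with yc show ?thesis by (rule that)
qed

lemma image_factorization:
  assumes k: "is_kernel C k h" and c: "is_cokernel C c k"
  shows "\<exists>m. m \<in> hom C (cd c) (cd h) \<and> cmp m c = h \<and> is_mono C m"
proof -
  obtain m where m: "m \<in> hom C (cd c) (cd h)" "cmp m c = h"
    using cokernel_factor[OF c, of h] kernelD[OF k] cokernelD[OF c] by auto
  have mc: "dm m = cd c" "cd m = cd h" using m by (auto simp: hom_iff)
  have "is_mono C m"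
  proof (rule monoI_zero)
    fix u assume u: "cd u = dm m" "cmp m u = zr (dm u) (cd m)"
    obtain q where q: "is_cokernel C q u" using ex_cokernel by blast
    note qD = cokernelD[OF q]
    obtain m2 where m2: "m2 \<in> hom C (cd q) (cd m)" "cmp m2 q = m"
      using cokernel_factor[OF q, of m] u by auto
    have m2c: "dm m2 = cd q" using m2 by (auto simp: hom_iff)
    have cq: "cd c = dm q" using qD u mc by simp
    have "cmp m2 (cmp q c) = h" using m(2) m2(2) comp_assoc[of c q m2] cq m2c by simp
    then obtain y where y: "dm y = cd q" "cd y = cd c" "cmp y q = cid C (cd c)"
      using coimage_epi_factor_split[OF k c cokernel_epi[OF q] cq m2c[symmetric]] by blast
    have "u = cmp (cmp y q) u" using y(3) u mc comp_id_left[of u] by simp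
    also have "\<dots> = cmp y (cmp q u)" using comp_assoc[of u q y] qD(1) y(1) by simp
    also have "\<dots> = zr (dm u) (cd y)" using qD(2) y(1) comp_zero_right'[of y] by simp
    finally show "u = zr (dm u) (dm m)" using y mc by simp
  qed
  then show ?thesis using m by blast
qed

definition hom_sum :: "'o \<Rightarrow> 'o \<Rightarrow> 'm list \<Rightarrow> 'm" where
  "hom_sum X Y fs = foldr ad fs (zr X Y)"

lemma hom_sum_hom: "(\<And>f. f \<in> set fs \<Longrightarrow> f \<in> hom C X Y) \<Longrightarrow> hom_sum X Y fs \<in> hom C X Y"
  by (induction fs) (auto simp: hom_sum_def zero_hom add_hom)

lemma binary_biproduct: "\<exists>S i1 i2 p1 p2. i1 \<in> hom C X S \<and> i2 \<in> hom C Y S \<and> p1 \<in> hom C S X \<and> p2 \<in> hom C S Y \<and>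
        cmp p1 i1 = cid C X \<and> cmp p2 i2 = cid C Y \<and>
        cmp p1 i2 = zr Y X \<and> cmp p2 i1 = zr X Y"
  using qab unfolding Qlinear_abelian_def by meson

lemma list_biproduct: "\<exists>S \<iota> \<pi>. (\<forall>i<length zs. \<iota> i \<in> hom C (zs!i) S \<and> \<pi> i \<in> hom C S (zs!i)) \<and>
   (\<forall>i<length zs. \<forall>j<length zs. cmp (\<pi> j) (\<iota> i) = (if i = j then cid C (zs!i) else zr (zs!i) (zs!j)))"
proof (induction zs)
  case Nil then show ?case by simp
next
  case (Cons z zs)
  then obtain S \<iota> \<pi> where IH: "\<forall>i<length zs. \<iota> i \<in> hom C (zs!i) S \<and> \<pi> i \<in> hom C S (zs!i)"
   "\<forall>i<length zs. \<forall>j<length zs. cmp (\<pi> j) (\<iota> i) = (if i = j then cid C (zs!i) else zr (zs!i) (zs!j))"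
    by blast
  obtain T i1 i2 p1 p2 where b: "i1 \<in> hom C z T" "i2 \<in> hom C S T" "p1 \<in> hom C T z" "p2 \<in> hom C T S"
        "cmp p1 i1 = cid C z" "cmp p2 i2 = cid C S"
        "cmp p1 i2 = zr S z" "cmp p2 i1 = zr z S"
    using binary_biproduct[of z S] by blast
  define \<iota>' where "\<iota>' i = (if i = 0 then i1 else cmp i2 (\<iota> (i - 1)))" for i
  define \<pi>' where "\<pi>' i = (if i = 0 then p1 else cmp (\<pi> (i - 1)) p2)" for i
  have h1: "\<iota>' i \<in> hom C ((z#zs)!i) T \<and> \<pi>' i \<in> hom C T ((z#zs)!i)" if "i < length (z#zs)" for i
  proof (cases i)
    case 0 then show ?thesis using b by (simp add: \<iota>'_def \<pi>'_def)
  next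
    case (Suc k) then have "k < length zs" using that by simp
    then show ?thesis using IH(1) b Suc by (auto simp: \<iota>'_def \<pi>'_def intro: comp_hom)
  qed
  have h2: "cmp (\<pi>' j) (\<iota>' i) = (if i = j then cid C ((z#zs)!i) else zr ((z#zs)!i) ((z#zs)!j))"
    if ij: "i < length (z#zs)" "j < length (z#zs)" for i j
  proof (cases i)
    case 0 note i0 = 0
    then show ?thesis
    proof (cases j)
      case 0 then show ?thesis using i0 b by (simp add: \<iota>'_def \<pi>'_def)
    next
      case (Suc l) then have l: "l < length zs" using ij by simp
      have pl: "\<pi> l \<in> hom C S (zs!l)" using IH(1) l by blast
      have "cmp (\<pi>' j) (\<iota>' i) = cmp (cmp (\<pi> l) p2) i1" using i0 Suc by (simp add: \<iota>'_def \<pi>'_def)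
      also have "\<dots> = cmp (\<pi> l) (cmp p2 i1)" using comp_assoc[of i1 p2 "\<pi> l"] b pl by (simp add: hom_iff)
      also have "\<dots> = zr z (zs!l)" using b(8) comp_zero_right[OF pl] by simp
      finally show ?thesis using i0 Suc by simp
    qed
  next
    case (Suc k) note ik = this
    then have k: "k < length zs" using ij by simp
    have ik': "\<iota> k \<in> hom C (zs!k) S" using IH(1) k by blast
    show ?thesis
    proof (cases j)
      case 0
      have "cmp (\<pi>' j) (\<iota>' i) = cmp p1 (cmp i2 (\<iota> k))" using 0 ik by (simp add: \<iota>'_def \<pi>'_def)
      also have "\<dots> = cmp (cmp p1 i2) (\<iota> k)" using comp_assoc[of "\<iota> k" i2 p1] b ik' by (simp add: hom_iff)
      also have "\<dots> = zr (zs!k) z" using b(7) comp_zero_left[OF ik'] by simp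
      finally show ?thesis using 0 ik by simp
    next
      case (Suc l) then have l: "l < length zs" using ij by simp
      have pl: "\<pi> l \<in> hom C S (zs!l)" using IH(1) l by blast
      have "cmp (\<pi>' j) (\<iota>' i) = cmp (cmp (\<pi> l) p2) (cmp i2 (\<iota> k))" using ik Suc by (simp add: \<iota>'_def \<pi>'_def)
      also have "\<dots> = cmp (\<pi> l) (cmp (cmp p2 i2) (\<iota> k))"
        using comp_assoc[of "\<iota> k" i2 p2] comp_assoc[of "cmp i2 (\<iota> k)" p2 "\<pi> l"] b ik' pl
        by (simp add: hom_iff)
      also have "\<dots> = cmp (\<pi> l) (\<iota> k)" using b(6) ik' comp_id_left[of "\<iota> k"] by (simp add: hom_iff)
      also have "\<dots> = (if k = l then cid C (zs!k) else zr (zs!k) (zs!l))" using IH(2) k l by blast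
      finally show ?thesis using ik Suc by simp
    qed
  qed
  show ?case using h1 h2 by blast
qed

lemma retracts_into_object:
  obtains \<iota> X \<rho> where
    "\<And>Z. Z \<in> set zs \<Longrightarrow> \<iota> Z \<in> hom C Z X \<and> \<rho> Z \<in> hom C X Z \<and> cmp (\<rho> Z) (\<iota> Z) = cid C Z"
proof -
  obtain X \<iota> \<pi> where Xb: "\<forall>i<length zs. \<iota> i \<in> hom C (zs!i) X \<and> \<pi> i \<in> hom C X (zs!i)"
    "\<forall>i<length zs. \<forall>j<length zs. cmp (\<pi> j) (\<iota> i) = (if i = j then cid C (zs!i) else zr (zs!i) (zs!j))"
    using list_biproduct[of zs] by blast
  define idx where "idx Z = (SOME i. i < length zs \<and> zs ! i = Z)" for Z
  have idx: "idx Z < length zs \<and> zs ! idx Z = Z" if "Z \<in> set zs" for Z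
    unfolding idx_def by (rule someI_ex) (use that in \<open>auto simp: in_set_conv_nth\<close>)
  show ?thesis
  proof (rule that)
    fix Z assume Z: "Z \<in> set zs"
    then show "\<iota> (idx Z) \<in> hom C Z X \<and> \<pi> (idx Z) \<in> hom C X Z \<and> cmp (\<pi> (idx Z)) (\<iota> (idx Z)) = cid C Z"
      using Xb(1)[rule_format, of "idx Z"] Xb(2)[rule_format, of "idx Z" "idx Z"] idx[OF Z] by simp
  qed
qed

end

section \<open>Fiber functors\<close>

locale fiber_functor_on = qlinear_abelian_cat C for C :: "('o, 'm) qcat" +
  fixes F :: "complex set" and d :: "'o \<Rightarrow> nat" and H :: "'m \<Rightarrow> complex mat"
  assumes sub: "subfield_C F" and ff: "fiber_functor C F d H"
begin

lemma H_Fmat: "H f \<in> Fmat F (d (cd f)) (d (dm f))"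
  using ff unfolding fiber_functor_def by simp
lemma H_carrier: "H f \<in> carrier_mat (d (cd f)) (d (dm f))"
  using H_Fmat Fmat_carrier by blast
lemma H_dims[simp]: "dim_row (H f) = d (cd f)" "dim_col (H f) = d (dm f)"
  using H_carrier[of f] by auto
lemma H_id[simp]: "H (cid C X) = 1\<^sub>m (d X)"
  using ff unfolding fiber_functor_def by simp
lemma H_comp: "cd f = dm g \<Longrightarrow> H (cmp g f) = H g * H f"
  using ff unfolding fiber_functor_def by simp
lemma H_add: "f \<in> hom C X Y \<Longrightarrow> g \<in> hom C X Y \<Longrightarrow> H (ad f g) = H f + H g"
  using ff unfolding fiber_functor_def by simp
lemma H_smul: "H (csmul C q f) = of_rat q \<cdot>\<^sub>m H f"
  using ff unfolding fiber_functor_def by simp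
lemma H_zero[simp]: "H (zr X Y) = 0\<^sub>m (d Y) (d X)"
proof -
  have c: "H (zr X Y) \<in> carrier_mat (d Y) (d X)" using H_carrier[of "zr X Y"] by simp
  have e: "H (zr X Y) = H (zr X Y) + H (zr X Y)"
    using H_add[OF zero_hom zero_hom, of X Y] unfolding add_zero_zero .
  show ?thesis using mat_eq_zero_if_double[OF c e] .
qed

lemma H_mult_vec_comp: assumes "cd f = dm g" "v \<in> carrier_vec (d (dm f))" shows
   "H (cmp g f) *\<^sub>v v = H g *\<^sub>v (H f *\<^sub>v v)"
proof -
  have "H g \<in> carrier_mat (d (cd g)) (d (cd f))" using H_carrier[of g] assms(1) by simp
  note a = assoc_mult_mat_vec[OF this H_carrier[of f] assms(2)]
  show ?thesis unfolding H_comp[OF assms(1)] by (rule a)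
qed

lemma H_mult_Fvec: "v \<in> Fvec F (d (dm f)) \<Longrightarrow> H f *\<^sub>v v \<in> Fvec F (d (cd f))"
  by (rule Fmat_mult_vec[OF sub H_Fmat])

lemma short_exact_H_inj: "short_exact C s p \<Longrightarrow> v \<in> Fvec F (d (dm s)) \<Longrightarrow>
    H s *\<^sub>v v = 0\<^sub>v (d (cd s)) \<Longrightarrow> v = 0\<^sub>v (d (dm s))"
  using ff unfolding fiber_functor_def by simp
lemma short_exact_H_surj: "short_exact C s p \<Longrightarrow> w \<in> Fvec F (d (cd p)) \<Longrightarrow> \<exists>v\<in>Fvec F (d (dm p)). H p *\<^sub>v v = w"
  using ff unfolding fiber_functor_def by simp
lemma short_exact_H_exact: "short_exact C s p \<Longrightarrow> v \<in> Fvec F (d (dm p)) \<Longrightarrow>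
    H p *\<^sub>v v = 0\<^sub>v (d (cd p)) \<longleftrightarrow> (\<exists>u\<in>Fvec F (d (dm s)). H s *\<^sub>v u = v)"
  using ff unfolding fiber_functor_def by simp

lemma mono_H_inj: assumes m: "is_mono C m" and v: "v \<in> Fvec F (d (dm m))" "H m *\<^sub>v v = 0\<^sub>v (d (cd m))"
  shows "v = 0\<^sub>v (d (dm m))"
proof -
  obtain c where c: "is_cokernel C c m" using ex_cokernel by blast
  show ?thesis using short_exact_H_inj[OF short_exact_mono_cokernel[OF m c] v] .
qed

lemma kernel_H_exact: assumes k: "is_kernel C k h" and v: "v \<in> Fvec F (d (dm h))"
  and hv: "H h *\<^sub>v v = 0\<^sub>v (d (cd h))"
  shows "\<exists>u\<in>Fvec F (d (dm k)). H k *\<^sub>v u = v"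
proof -
  obtain c where c: "is_cokernel C c k" using ex_cokernel by blast
  obtain m where m: "m \<in> hom C (cd c) (cd h)" "cmp m c = h" "is_mono C m"
    using image_factorization[OF k c] by blast
  have mc: "dm m = cd c" "cd m = cd h" using m by (auto simp: hom_iff)
  have ses: "short_exact C k c" using short_exact_mono_cokernel[OF kernel_mono[OF k] c] .
  note kD = kernelD[OF k] and cD = cokernelD[OF c]
  have dc: "dm c = dm h" using kD cD by simp
  have vc: "v \<in> Fvec F (d (dm c))" using v dc by simp
  have cv: "H c *\<^sub>v v \<in> Fvec F (d (dm m))" using H_mult_Fvec[OF vc] mc by simp
  have "H m *\<^sub>v (H c *\<^sub>v v) = H (cmp m c) *\<^sub>v v"
    using H_mult_vec_comp[of c m v] mc Fvec_carrier[OF vc] by simp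
  also have "\<dots> = H h *\<^sub>v v" using m(2) by simp
  finally have "H m *\<^sub>v (H c *\<^sub>v v) = 0\<^sub>v (d (cd m))" using hv mc by simp
  hence "H c *\<^sub>v v = 0\<^sub>v (d (dm m))" using mono_H_inj[OF m(3) cv] by simp
  hence "H c *\<^sub>v v = 0\<^sub>v (d (cd c))" using mc by simp
  thus ?thesis using short_exact_H_exact[OF ses vc] by blast
qed

lemma image_short_exact: "\<exists>N' N s p. s \<in> hom C N' (cd h) \<and> p \<in> hom C (cd h) N \<and> short_exact C s p \<and>
   (\<forall>v\<in>Fvec F (d (dm h)). \<exists>u\<in>Fvec F (d N'). H s *\<^sub>v u = H h *\<^sub>v v) \<and>
   (\<forall>u\<in>Fvec F (d N'). \<exists>v\<in>Fvec F (d (dm h)). H s *\<^sub>v u = H h *\<^sub>v v)"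
proof -
  obtain k where k: "is_kernel C k h" using ex_kernel by blast
  obtain c where c: "is_cokernel C c k" using ex_cokernel by blast
  obtain m where m: "m \<in> hom C (cd c) (cd h)" "cmp m c = h" "is_mono C m"
    using image_factorization[OF k c] by blast
  have mc: "dm m = cd c" "cd m = cd h" using m by (auto simp: hom_iff)
  obtain p where p: "is_cokernel C p m" using ex_cokernel by blast
  have sesm: "short_exact C m p" using short_exact_mono_cokernel[OF m(3) p] .
  have ses: "short_exact C k c" using short_exact_mono_cokernel[OF kernel_mono[OF k] c] .
  note kD = kernelD[OF k] and cD = cokernelD[OF c] and pD = cokernelD[OF p]
  have dc: "dm c = dm h" using kD cD by simp
  have eq: "H m *\<^sub>v (H c *\<^sub>v v) = H h *\<^sub>v v" if "v \<in> Fvec F (d (dm h))" for v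
  proof -
    have "H m *\<^sub>v (H c *\<^sub>v v) = H (cmp m c) *\<^sub>v v"
      using H_mult_vec_comp[of c m v] mc Fvec_carrier[OF that] dc by simp
    thus ?thesis using m(2) by simp
  qed
  have A1: "\<forall>v\<in>Fvec F (d (dm h)). \<exists>u\<in>Fvec F (d (cd c)). H m *\<^sub>v u = H h *\<^sub>v v"
  proof
    fix v assume v: "v \<in> Fvec F (d (dm h))"
    have "H c *\<^sub>v v \<in> Fvec F (d (cd c))" using H_mult_Fvec[of v c] v dc by simp
    thus "\<exists>u\<in>Fvec F (d (cd c)). H m *\<^sub>v u = H h *\<^sub>v v"
      using eq[OF v] by blast
  qed
  have A2: "\<forall>u\<in>Fvec F (d (cd c)). \<exists>v\<in>Fvec F (d (dm h)). H m *\<^sub>v u = H h *\<^sub>v v"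
  proof
    fix u assume u: "u \<in> Fvec F (d (cd c))"
    obtain v where v: "v \<in> Fvec F (d (dm c))" "H c *\<^sub>v v = u" using short_exact_H_surj[OF ses u] by blast
    have v': "v \<in> Fvec F (d (dm h))" using v dc by simp
    show "\<exists>v\<in>Fvec F (d (dm h)). H m *\<^sub>v u = H h *\<^sub>v v"
      using eq[OF v'] v(2) v' by blast
  qed
  have hp: "p \<in> hom C (cd h) (cd p)" using pD mc by (simp add: hom_iff)
  show ?thesis
    apply (rule exI[of _ "cd c"], rule exI[of _ "cd p"], rule exI[of _ m], rule exI[of _ p])
    using m(1) hp sesm A1 A2 by simp
qed

lemma H_hom_sum_vec: assumes "\<And>x. x \<in> set xs \<Longrightarrow> f x \<in> hom C X Y" and v: "v \<in> carrier_vec (d X)" and a: "a < d Y"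
  shows "(H (hom_sum X Y (map f xs)) *\<^sub>v v) $ a = (\<Sum>x\<leftarrow>xs. (H (f x) *\<^sub>v v) $ a)"
  using assms(1)
proof (induction xs)
  case Nil
  show ?case using v a by (simp add: hom_sum_def)
next
  case (Cons x xs)
  have fx: "f x \<in> hom C X Y" using Cons by simp
  have r: "hom_sum X Y (map f xs) \<in> hom C X Y" using Cons.prems by (intro hom_sum_hom) auto
  have "hom_sum X Y (map f (x # xs)) = ad (f x) (hom_sum X Y (map f xs))" by (simp add: hom_sum_def)
  hence "H (hom_sum X Y (map f (x # xs))) = H (f x) + H (hom_sum X Y (map f xs))"
    using H_add[OF fx r] by simp
  moreover have "H (f x) \<in> carrier_mat (d Y) (d X)" using H_carrier[of "f x"] fx by (simp add: hom_iff)
  moreover have "H (hom_sum X Y (map f xs)) \<in> carrier_mat (d Y) (d X)" using H_carrier[of "hom_sum X Y (map f xs)"] r by (simp add: hom_iff)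
  ultimately have "H (hom_sum X Y (map f (x # xs))) *\<^sub>v v = H (f x) *\<^sub>v v + H (hom_sum X Y (map f xs)) *\<^sub>v v"
    using v add_mult_distrib_mat_vec by metis
  hence "(H (hom_sum X Y (map f (x # xs))) *\<^sub>v v) $ a = (H (f x) *\<^sub>v v) $ a + (H (hom_sum X Y (map f xs)) *\<^sub>v v) $ a"
    using a fx r by (simp add: hom_iff)
  then show ?case using Cons by simp
qed

lemma H_smul_vec: assumes v: "v \<in> carrier_vec (d (dm f))" and a: "a < d (cd f)"
  shows "(H (csmul C q f) *\<^sub>v v) $ a = of_rat q * (H f *\<^sub>v v) $ a"
  using v a H_carrier[of f] by (simp add: H_smul scalar_prod_def sum_distrib_left mult.assoc)

lemma joint_kernel_factor:
  assumes "\<forall>f\<in>set fs. dm f = Y" "\<beta> \<in> Fvec F (d Y)" "\<forall>f\<in>set fs. H f *\<^sub>v \<beta> = 0\<^sub>v (d (cd f))"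
  shows "\<exists>G k z0. k \<in> hom C G Y \<and> z0 \<in> Fvec F (d G) \<and> H k *\<^sub>v z0 = \<beta> \<and>
     (\<forall>f\<in>set fs. \<forall>z\<in>Fvec F (d G). H f *\<^sub>v (H k *\<^sub>v z) = 0\<^sub>v (d (cd f)))"
  using assms(1,3)
proof (induction fs)
  case Nil
  show ?case
    apply (rule exI[of _ Y], rule exI[of _ "cid C Y"], rule exI[of _ \<beta>])
    using assms(2) id_hom[of Y] Fvec_carrier[OF assms(2)] by simp
next
  case (Cons f fs)
  then obtain G k z0 where IH: "k \<in> hom C G Y" "z0 \<in> Fvec F (d G)" "H k *\<^sub>v z0 = \<beta>"
     "\<forall>f\<in>set fs. \<forall>z\<in>Fvec F (d G). H f *\<^sub>v (H k *\<^sub>v z) = 0\<^sub>v (d (cd f))" by auto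
  have kd: "dm k = G" "cd k = Y" using IH(1) by (auto simp: hom_iff)
  have fd: "dm f = Y" using Cons.prems by simp
  define h where "h = cmp f k"
  have hd: "dm h = G" "cd h = cd f" unfolding h_def using kd fd by auto
  obtain k' where k': "is_kernel C k' h" using ex_kernel by blast
  note k'D = kernelD[OF k']
  have hz0: "H h *\<^sub>v z0 = 0\<^sub>v (d (cd h))"
    unfolding h_def using H_mult_vec_comp[of k f z0] kd fd IH Fvec_carrier[OF IH(2)] Cons.prems by simp
  obtain z1 where z1: "z1 \<in> Fvec F (d (dm k'))" "H k' *\<^sub>v z1 = z0"
    using kernel_H_exact[OF k', of z0] hz0 IH(2) hd by auto
  have k'd: "cd k' = G" using k'D hd by simp
  define k2 where "k2 = cmp k k'"
  have k2: "k2 \<in> hom C (dm k') Y" unfolding k2_def using k'd kd by (simp add: hom_iff)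
  have k2v: "H k2 *\<^sub>v z = H k *\<^sub>v (H k' *\<^sub>v z)" if "z \<in> Fvec F (d (dm k'))" for z
    unfolding k2_def using H_mult_vec_comp[of k' k z] k'd kd Fvec_carrier[OF that] by simp
  have zk': "H k' *\<^sub>v z \<in> Fvec F (d G)" if "z \<in> Fvec F (d (dm k'))" for z
    using H_mult_Fvec[OF that] k'd by simp
  have A: "\<forall>g\<in>set (f # fs). \<forall>z\<in>Fvec F (d (dm k')). H g *\<^sub>v (H k2 *\<^sub>v z) = 0\<^sub>v (d (cd g))"
  proof (intro ballI)
    fix g z assume g: "g \<in> set (f # fs)" and z: "z \<in> Fvec F (d (dm k'))"
    show "H g *\<^sub>v (H k2 *\<^sub>v z) = 0\<^sub>v (d (cd g))"
    proof (cases "g = f")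
      case True
      have "H f *\<^sub>v (H k *\<^sub>v (H k' *\<^sub>v z)) = H h *\<^sub>v (H k' *\<^sub>v z)"
        unfolding h_def using H_mult_vec_comp[of k f "H k' *\<^sub>v z"] kd fd Fvec_carrier[OF zk'[OF z]] by simp
      also have "\<dots> = H (cmp h k') *\<^sub>v z"
        using H_mult_vec_comp[of k' h z] k'D Fvec_carrier[OF z] by simp
      also have "\<dots> = 0\<^sub>v (d (cd f))" using k'D hd Fvec_carrier[OF z] by simp
      finally show ?thesis using True k2v[OF z] by simp
    next
      case False
      hence "g \<in> set fs" using g by simp
      thus ?thesis using IH(4) k2v[OF z] zk'[OF z] by simp
    qed
  qed
  show ?case
    apply (rule exI[of _ "dm k'"], rule exI[of _ k2], rule exI[of _ z1])
    using k2 z1 A k2v[OF z1(1)] IH(3) by simp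
qed

lemma biproduct_coordinate_vector:
  assumes Yb: "\<forall>i<n. \<iota> i \<in> hom C X Y \<and> \<pi> i \<in> hom C Y X"
    "\<forall>i<n. \<forall>j<n. cmp (\<pi> j) (\<iota> i) = (if i = j then cid C X else zr X X)" and n: "n = d X"
  shows "\<exists>\<beta>\<in>Fvec F (d Y). \<forall>j<n. H (\<pi> j) *\<^sub>v \<beta> = unit_vec n j"
proof -
  define \<beta> where "\<beta> = vec (d Y) (\<lambda>k. \<Sum>i<n. H (\<iota> i) $$ (k,i))"
  have \<iota>c: "H (\<iota> i) \<in> Fmat F (d Y) n" if "i < n" for i
    using H_Fmat[of "\<iota> i"] Yb that n by (auto simp: hom_iff)
  have \<pi>c: "H (\<pi> i) \<in> carrier_mat n (d Y)" if "i < n" for i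
    using H_carrier[of "\<pi> i"] Yb that n by (auto simp: hom_iff)
  have \<beta>: "\<beta> \<in> Fvec F (d Y)"
    unfolding \<beta>_def Fvec_def using \<iota>c unfolding Fmat_def
    by (auto intro!: subfield_sum[OF sub])
  have "H (\<pi> j) *\<^sub>v \<beta> = unit_vec n j" if j: "j < n" for j
  proof (rule eq_vecI)
    fix m assume "m < dim_vec (unit_vec n j :: complex vec)"
    hence m: "m < n" by simp
    have "(H (\<pi> j) *\<^sub>v \<beta>) $ m = (\<Sum>k<d Y. H (\<pi> j) $$ (m,k) * (\<Sum>i<n. H (\<iota> i) $$ (k,i)))"
      using mult_mat_vec_index_sum[OF \<pi>c[OF j] _ m, of \<beta>] unfolding \<beta>_def by simp
    also have "\<dots> = (\<Sum>i<n. \<Sum>k<d Y. H (\<pi> j) $$ (m,k) * H (\<iota> i) $$ (k,i))"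
      by (simp add: sum_distrib_left sum.swap[of _ "{..<d Y}"])
    also have "\<dots> = (\<Sum>i<n. (H (\<pi> j) * H (\<iota> i)) $$ (m,i))"
    proof (rule sum.cong)
      fix i assume "i \<in> {..<n}" hence i: "i < n" by simp
      have ic: "H (\<iota> i) \<in> carrier_mat (d Y) n" using Fmat_carrier[OF \<iota>c[OF i]] .
      have d: "dim_row (H (\<pi> j)) = n" "dim_col (H (\<iota> i)) = n" "dim_row (H (\<iota> i)) = d Y" "dim_col (H (\<pi> j)) = d Y"
        using \<pi>c[OF j] ic by auto
      have "(H (\<pi> j) * H (\<iota> i)) $$ (m,i) = row (H (\<pi> j)) m \<bullet> col (H (\<iota> i)) i"
        using d m i by (simp only: index_mult_mat)
      also have "\<dots> = (\<Sum>k<d Y. H (\<pi> j) $$ (m,k) * H (\<iota> i) $$ (k,i))"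
        unfolding scalar_prod_def using d m i by (simp add: atLeast0LessThan)
      finally show "(\<Sum>k<d Y. H (\<pi> j) $$ (m,k) * H (\<iota> i) $$ (k,i)) = (H (\<pi> j) * H (\<iota> i)) $$ (m,i)" by simp
    qed simp
    also have "\<dots> = (\<Sum>i<n. (if i = j then 1\<^sub>m n else 0\<^sub>m n n) $$ (m,i))"
    proof (rule sum.cong)
      fix i assume "i \<in> {..<n}" hence i: "i < n" by simp
      have "H (\<pi> j) * H (\<iota> i) = H (cmp (\<pi> j) (\<iota> i))"
        using H_comp[of "\<iota> i" "\<pi> j"] Yb i j by (simp add: hom_iff)
      also have "\<dots> = (if i = j then 1\<^sub>m n else 0\<^sub>m n n)" using Yb(2) i j n by simp
      finally show "(H (\<pi> j) * H (\<iota> i)) $$ (m,i) = (if i = j then 1\<^sub>m n else 0\<^sub>m n n) $$ (m,i)" by simp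
    qed simp
    also have "\<dots> = (\<Sum>i<n. if i = j then (if m = j then 1 else 0) else 0)"
      by (rule sum.cong) (use m in auto)
    also have "\<dots> = unit_vec n j $ m" using j m by (simp add: unit_vec_def)
    finally show "(H (\<pi> j) *\<^sub>v \<beta>) $ m = unit_vec n j $ m" .
  qed (use Yb j n in \<open>simp add: hom_iff\<close>)
  thus ?thesis using \<beta> by blast
qed

end

section \<open>The commutant of finitely many endomorphisms is representable\<close>

locale rational_fiber_functor = fiber_functor_on C "\<rat>" d H
  for C :: "('o, 'm) qcat" and d :: "'o \<Rightarrow> nat" and H :: "'m \<Rightarrow> complex mat"
begin

definition lincomb :: "'o \<Rightarrow> 'o \<Rightarrow> nat \<Rightarrow> (nat \<Rightarrow> 'm) \<Rightarrow> complex vec \<Rightarrow> 'm" where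
  "lincomb Y X n \<pi> v = hom_sum Y X (map (\<lambda>i. csmul C (rat_of (v $ i)) (\<pi> i)) [0..<n])"

definition lincomb_defect :: "'o \<Rightarrow> 'o \<Rightarrow> nat \<Rightarrow> (nat \<Rightarrow> 'm) \<Rightarrow> 'm \<Rightarrow> nat \<Rightarrow> 'm" where
  "lincomb_defect Y X n \<pi> e j = ad (cmp e (\<pi> j)) (ng (lincomb Y X n \<pi> (col (H e) j)))"

definition coeff_mat :: "nat \<Rightarrow> (nat \<Rightarrow> 'm) \<Rightarrow> complex vec \<Rightarrow> complex mat" where
  "coeff_mat n \<pi> g = mat n n (\<lambda>(m, i). (H (\<pi> i) *\<^sub>v g) $ m)"

lemma coeff_mat_carrier: "coeff_mat n \<pi> g \<in> carrier_mat n n"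
  unfolding coeff_mat_def by simp

context
  fixes Y X n \<pi>
  assumes \<pi>: "\<forall>i<n. \<pi> i \<in> hom C Y X" and n: "n = d X"
begin

lemma lincomb_hom: "lincomb Y X n \<pi> v \<in> hom C Y X"
  unfolding lincomb_def using \<pi> by (intro hom_sum_hom) (auto intro: smul_hom)

lemma lincomb_vec:
  assumes g: "g \<in> carrier_vec (d Y)" and m: "m < n" and v: "v \<in> Fvec \<rat> n"
  shows "(H (lincomb Y X n \<pi> v) *\<^sub>v g) $ m = (\<Sum>i<n. v $ i * (H (\<pi> i) *\<^sub>v g) $ m)"
proof -
  have "(H (lincomb Y X n \<pi> v) *\<^sub>v g) $ m =
      (\<Sum>i\<leftarrow>[0..<n]. (H (csmul C (rat_of (v $ i)) (\<pi> i)) *\<^sub>v g) $ m)"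
    unfolding lincomb_def by (rule H_hom_sum_vec) (use \<pi> g m n smul_hom in auto)
  also have "\<dots> = (\<Sum>i<n. (H (csmul C (rat_of (v $ i)) (\<pi> i)) *\<^sub>v g) $ m)"
    by (simp add: sum_set_upt_conv_sum_list_nat[symmetric] atLeast0LessThan)
  also have "\<dots> = (\<Sum>i<n. v $ i * (H (\<pi> i) *\<^sub>v g) $ m)"
  proof (rule sum.cong)
    fix i assume "i \<in> {..<n}"
    then have i: "i < n" and "v $ i \<in> \<rat>" using v unfolding Fvec_def by auto
    moreover have "dm (\<pi> i) = Y" "cd (\<pi> i) = X" using \<pi> i by (auto simp: hom_iff)
    ultimately show "(H (csmul C (rat_of (v $ i)) (\<pi> i)) *\<^sub>v g) $ m = v $ i * (H (\<pi> i) *\<^sub>v g) $ m"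
      using H_smul_vec[of g "\<pi> i" m] g m n by (simp add: rat_of)
  qed simp
  finally show ?thesis .
qed

lemma lincomb_defect_hom: "e \<in> hom C X X \<Longrightarrow> j < n \<Longrightarrow> lincomb_defect Y X n \<pi> e j \<in> hom C Y X"
  unfolding lincomb_defect_def using \<pi> lincomb_hom by (intro add_hom comp_hom smul_hom) auto

lemma lincomb_defect_vec:
  assumes e: "e \<in> hom C X X" and j: "j < n" and g: "g \<in> carrier_vec (d Y)" and m: "m < n"
  shows "(H (lincomb_defect Y X n \<pi> e j) *\<^sub>v g) $ m =
     (H e *\<^sub>v (H (\<pi> j) *\<^sub>v g)) $ m - (\<Sum>i<n. H e $$ (i, j) * (H (\<pi> i) *\<^sub>v g) $ m)"
proof -
  let ?l = "lincomb Y X n \<pi> (col (H e) j)"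
  have ed: "dm e = X" "cd e = X" using e by (auto simp: hom_iff)
  have pj: "dm (\<pi> j) = Y" "cd (\<pi> j) = X" using \<pi> j by (auto simp: hom_iff)
  have h1: "cmp e (\<pi> j) \<in> hom C Y X" using comp_hom \<pi> j e by blast
  have h2: "ng ?l \<in> hom C Y X" using smul_hom lincomb_hom by blast
  have c1: "H (cmp e (\<pi> j)) \<in> carrier_mat (d X) (d Y)"
    using H_carrier[of "cmp e (\<pi> j)"] h1 by (simp add: hom_iff)
  have c2: "H (ng ?l) \<in> carrier_mat (d X) (d Y)"
    using H_carrier[of "ng ?l"] h2 by (simp add: hom_iff)
  have col: "col (H e) j \<in> Fvec \<rat> n"
    using H_Fmat[of e] ed j n unfolding Fmat_def Fvec_def by auto
  have "H (lincomb_defect Y X n \<pi> e j) *\<^sub>v g = H (cmp e (\<pi> j)) *\<^sub>v g + H (ng ?l) *\<^sub>v g"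
    unfolding lincomb_defect_def H_add[OF h1 h2] using add_mult_distrib_mat_vec[OF c1 c2 g] .
  then have "(H (lincomb_defect Y X n \<pi> e j) *\<^sub>v g) $ m =
      (H (cmp e (\<pi> j)) *\<^sub>v g) $ m + (H (ng ?l) *\<^sub>v g) $ m"
    using carrier_matD[OF c1] carrier_matD[OF c2] m n by simp
  also have "H (cmp e (\<pi> j)) *\<^sub>v g = H e *\<^sub>v (H (\<pi> j) *\<^sub>v g)"
    using H_mult_vec_comp[of "\<pi> j" e g] pj ed g by simp
  also have "(H (ng ?l) *\<^sub>v g) $ m = - (\<Sum>i<n. H e $$ (i, j) * (H (\<pi> i) *\<^sub>v g) $ m)"
    using H_smul_vec[of g ?l m, where q="-1"] lincomb_vec[OF g m col] lincomb_hom g m n ed j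
    by (simp add: hom_iff)
  finally show ?thesis by simp
qed

lemma coeff_mat_comm:
  assumes e: "e \<in> hom C X X" and g: "g \<in> carrier_vec (d Y)"
    and z: "\<forall>j<n. H (lincomb_defect Y X n \<pi> e j) *\<^sub>v g = 0\<^sub>v n"
  shows "coeff_mat n \<pi> g * H e = H e * coeff_mat n \<pi> g"
proof -
  have Ec: "H e \<in> carrier_mat n n" using H_carrier[of e] e n by (simp add: hom_iff)
  have pg: "H (\<pi> i) *\<^sub>v g \<in> carrier_vec n" if "i < n" for i
    using H_carrier[of "\<pi> i"] \<pi> that g n by (auto simp: hom_iff)
  show ?thesis
  proof (rule eq_matI)
    fix m j assume "m < dim_row (H e * coeff_mat n \<pi> g)" "j < dim_col (H e * coeff_mat n \<pi> g)"
    then have m: "m < n" and j: "j < n" using Ec by (auto simp: coeff_mat_def)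
    have "(coeff_mat n \<pi> g * H e) $$ (m, j) = (\<Sum>i<n. (H (\<pi> i) *\<^sub>v g) $ m * H e $$ (i, j))"
      using carrier_matD[OF Ec] m j unfolding coeff_mat_def by (simp add: scalar_prod_def atLeast0LessThan)
    also have "\<dots> = (H e *\<^sub>v (H (\<pi> j) *\<^sub>v g)) $ m"
      using lincomb_defect_vec[OF e j g m] z j m by (simp add: ac_simps)
    also have "\<dots> = (\<Sum>l<n. H e $$ (m, l) * (H (\<pi> j) *\<^sub>v g) $ l)"
      by (rule mult_mat_vec_index_sum[OF Ec pg[OF j] m])
    also have "\<dots> = (H e * coeff_mat n \<pi> g) $$ (m, j)"
      using carrier_matD[OF Ec] m j pg[OF j] unfolding coeff_mat_def by (simp add: scalar_prod_def atLeast0LessThan)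
    finally show "(coeff_mat n \<pi> g * H e) $$ (m, j) = (H e * coeff_mat n \<pi> g) $$ (m, j)" .
  qed (use Ec e n in \<open>auto simp: coeff_mat_def hom_iff\<close>)
qed

lemma coeff_mat_mult_vec:
  assumes g: "g \<in> carrier_vec (d Y)" and v: "v \<in> Fvec \<rat> n"
  shows "coeff_mat n \<pi> g *\<^sub>v v = H (lincomb Y X n \<pi> v) *\<^sub>v g"
proof (rule eq_vecI)
  fix m assume "m < dim_vec (H (lincomb Y X n \<pi> v) *\<^sub>v g)"
  then have m: "m < n" using lincomb_hom n by (simp add: hom_iff)
  have "(coeff_mat n \<pi> g *\<^sub>v v) $ m = (\<Sum>i<n. (H (\<pi> i) *\<^sub>v g) $ m * v $ i)"
    using mult_mat_vec_index_sum[OF coeff_mat_carrier Fvec_carrier[OF v] m] m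
    unfolding coeff_mat_def by simp
  then show "(coeff_mat n \<pi> g *\<^sub>v v) $ m = (H (lincomb Y X n \<pi> v) *\<^sub>v g) $ m"
    unfolding lincomb_vec[OF g m v] by (simp add: ac_simps)
qed (use lincomb_hom n in \<open>simp add: hom_iff coeff_mat_def\<close>)

context
  fixes \<beta>
  assumes \<beta>: "\<beta> \<in> carrier_vec (d Y)" "\<forall>j<n. H (\<pi> j) *\<^sub>v \<beta> = unit_vec n j"
begin

lemma coeff_mat_coordinate_vector: "coeff_mat n \<pi> \<beta> = 1\<^sub>m n"
  using \<beta> by (auto intro!: eq_matI simp: coeff_mat_def)

lemma lincomb_defect_coordinate_vector:
  assumes e: "e \<in> hom C X X" and j: "j < n"
  shows "H (lincomb_defect Y X n \<pi> e j) *\<^sub>v \<beta> = 0\<^sub>v n"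
proof (rule eq_vecI)
  have Ec: "H e \<in> carrier_mat n n" using H_carrier[of e] e n by (simp add: hom_iff)
  have f: "lincomb_defect Y X n \<pi> e j \<in> hom C Y X" by (rule lincomb_defect_hom[OF e j])
  fix m assume "m < dim_vec (0\<^sub>v n :: complex vec)"
  then have m: "m < n" by simp
  have "(H e *\<^sub>v unit_vec n j) $ m = H e $$ (m, j)"
    using carrier_matD[OF Ec] m j by simp
  moreover have "(\<Sum>i<n. H e $$ (i, j) * unit_vec n i $ m) = H e $$ (m, j)"
    using m by (simp add: unit_vec_def if_distrib[of "\<lambda>x. _ * x"] cong: if_cong)
  ultimately show "(H (lincomb_defect Y X n \<pi> e j) *\<^sub>v \<beta>) $ m = 0\<^sub>v n $ m"
    using lincomb_defect_vec[OF e j \<beta>(1) m] \<beta>(2) j m by simp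
qed (use lincomb_defect_hom[OF e j] n in \<open>simp add: hom_iff\<close>)

end

end

text \<open>The morphism \<open>lincomb_defect e j = e \<pi>\<^sub>j - \<Sum>\<^sub>i e\<^sub>i\<^sub>j \<pi>\<^sub>i : X\<^sup>n \<rightarrow> X\<close> maps \<open>g\<close> to column \<open>j\<close> of
  \<open>H e * coeff_mat g - coeff_mat g * H e\<close>, where \<open>coeff_mat g\<close> has the columns \<open>H(\<pi>\<^sub>i) g\<close>.\<close>
lemma lincomb_defect_joint_kernel:
  assumes es: "\<And>e. e \<in> set es \<Longrightarrow> e \<in> hom C X X"
  shows "\<exists>Y \<pi> G k z\<^sub>0. (\<forall>i<d X. \<pi> i \<in> hom C Y X) \<and> k \<in> hom C G Y \<and> z\<^sub>0 \<in> Fvec \<rat> (d G) \<and>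
    (\<forall>j<d X. H (\<pi> j) *\<^sub>v (H k *\<^sub>v z\<^sub>0) = unit_vec (d X) j) \<and>
    (\<forall>e\<in>set es. \<forall>j<d X. \<forall>z\<in>Fvec \<rat> (d G). H (lincomb_defect Y X (d X) \<pi> e j) *\<^sub>v (H k *\<^sub>v z) = 0\<^sub>v (d X))"
proof -
  define n where "n = d X"
  obtain Y \<iota> \<pi> where Yb: "\<forall>i<n. \<iota> i \<in> hom C X Y \<and> \<pi> i \<in> hom C Y X"
    "\<forall>i<n. \<forall>j<n. cmp (\<pi> j) (\<iota> i) = (if i = j then cid C X else zr X X)"
    using list_biproduct[of "replicate n X"] by auto
  have \<pi>: "\<forall>i<n. \<pi> i \<in> hom C Y X" using Yb(1) by blast
  obtain \<beta> where \<beta>: "\<beta> \<in> Fvec \<rat> (d Y)" "\<forall>j<n. H (\<pi> j) *\<^sub>v \<beta> = unit_vec n j"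
    using biproduct_coordinate_vector[OF Yb n_def] by blast
  define fs where "fs = concat (map (\<lambda>e. map (lincomb_defect Y X n \<pi> e) [0..<n]) es)"
  have fs_cases: "\<exists>e\<in>set es. \<exists>j<n. f = lincomb_defect Y X n \<pi> e j" if "f \<in> set fs" for f
    using that unfolding fs_def by auto blast
  have in_fs: "lincomb_defect Y X n \<pi> e j \<in> set fs" if "e \<in> set es" "j < n" for e j
    using that unfolding fs_def by (auto intro!: bexI[of _ e])
  have fs_hom: "f \<in> hom C Y X" if "f \<in> set fs" for f
    using fs_cases[OF that] lincomb_defect_hom[OF \<pi> n_def es] by auto
  have fs_zero: "\<forall>f\<in>set fs. H f *\<^sub>v \<beta> = 0\<^sub>v (d (cd f))"
  proof
    fix f assume f: "f \<in> set fs"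
    then obtain e j where "e \<in> set es" "j < n" "f = lincomb_defect Y X n \<pi> e j"
      using fs_cases by blast
    then show "H f *\<^sub>v \<beta> = 0\<^sub>v (d (cd f))"
      using lincomb_defect_coordinate_vector[OF \<pi> n_def Fvec_carrier[OF \<beta>(1)] \<beta>(2) es] fs_hom[OF f]
      by (simp add: hom_iff n_def)
  qed
  have "\<forall>f\<in>set fs. dm f = Y" using fs_hom by (simp add: hom_iff)
  then obtain G k z\<^sub>0 where Gk: "k \<in> hom C G Y" "z\<^sub>0 \<in> Fvec \<rat> (d G)" "H k *\<^sub>v z\<^sub>0 = \<beta>"
    "\<forall>f\<in>set fs. \<forall>z\<in>Fvec \<rat> (d G). H f *\<^sub>v (H k *\<^sub>v z) = 0\<^sub>v (d (cd f))"
    using joint_kernel_factor[OF _ \<beta>(1) fs_zero] by blast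
  have coord: "\<forall>j<n. H (\<pi> j) *\<^sub>v (H k *\<^sub>v z\<^sub>0) = unit_vec n j" using Gk(3) \<beta>(2) by simp
  have defect: "\<forall>e\<in>set es. \<forall>j<n. \<forall>z\<in>Fvec \<rat> (d G). H (lincomb_defect Y X n \<pi> e j) *\<^sub>v (H k *\<^sub>v z) = 0\<^sub>v n"
  proof (intro ballI allI impI)
    fix e j z assume e: "e \<in> set es" and j: "j < n" and z: "z \<in> Fvec \<rat> (d G)"
    show "H (lincomb_defect Y X n \<pi> e j) *\<^sub>v (H k *\<^sub>v z) = 0\<^sub>v n"
      using Gk(4)[rule_format, OF in_fs[OF e j] z] lincomb_defect_hom[OF \<pi> n_def es[OF e] j]
      by (simp add: hom_iff n_def)
  qed
  show ?thesis
    unfolding n_def[symmetric]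
    by (rule exI[of _ Y], rule exI[of _ \<pi>], rule exI[of _ G], rule exI[of _ k], rule exI[of _ z\<^sub>0],
        intro conjI) (fact \<pi> Gk(1) Gk(2) coord defect)+
qed

lemma commutant_representable:
  assumes es: "\<And>e. e \<in> set es \<Longrightarrow> e \<in> hom C X X"
  obtains z\<^sub>0 G h L where "z\<^sub>0 \<in> Fvec \<rat> (d G)"
    and "\<forall>x\<in>Fvec \<rat> (d X). h x \<in> hom C G X \<and> H (h x) *\<^sub>v z\<^sub>0 = x"
    and "\<forall>z\<in>Fvec \<rat> (d G). L z \<in> carrier_mat (d X) (d X) \<and> (\<forall>e\<in>set es. L z * H e = H e * L z)"
    and "\<forall>z\<in>Fvec \<rat> (d G). \<forall>x\<in>Fvec \<rat> (d X). H (h x) *\<^sub>v z = L z *\<^sub>v x"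
proof -
  define n where "n = d X"
  obtain Y \<pi> G k z\<^sub>0 where \<pi>: "\<forall>i<n. \<pi> i \<in> hom C Y X" and Gk: "k \<in> hom C G Y" "z\<^sub>0 \<in> Fvec \<rat> (d G)"
    and coord: "\<forall>j<n. H (\<pi> j) *\<^sub>v (H k *\<^sub>v z\<^sub>0) = unit_vec n j"
    and defect: "\<forall>e\<in>set es. \<forall>j<n. \<forall>z\<in>Fvec \<rat> (d G). H (lincomb_defect Y X n \<pi> e j) *\<^sub>v (H k *\<^sub>v z) = 0\<^sub>v n"
    using lincomb_defect_joint_kernel[OF es] unfolding n_def by blast
  define h where "h x = cmp (lincomb Y X n \<pi> x) k" for x
  define L where "L z = coeff_mat n \<pi> (H k *\<^sub>v z)" for z
  have h_hom: "h x \<in> hom C G X" for x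
    unfolding h_def using comp_hom[OF Gk(1) lincomb_hom[OF \<pi> n_def]] .
  have Hk: "H k *\<^sub>v z \<in> carrier_vec (d Y)" if "z \<in> Fvec \<rat> (d G)" for z
    using H_carrier[of k] Gk(1) Fvec_carrier[OF that] by (auto simp: hom_iff)
  have h_vec: "H (h x) *\<^sub>v z = L z *\<^sub>v x" if "x \<in> Fvec \<rat> (d X)" "z \<in> Fvec \<rat> (d G)" for x z
    using H_mult_vec_comp[of k "lincomb Y X n \<pi> x" z] lincomb_hom[OF \<pi> n_def] Gk(1) that
      coeff_mat_mult_vec[OF \<pi> n_def Hk[OF that(2)]] Fvec_carrier
    by (simp add: h_def L_def hom_iff n_def)
  show ?thesis
  proof (rule that[of z\<^sub>0 G h L])
    show "z\<^sub>0 \<in> Fvec \<rat> (d G)" by (fact Gk(2))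
    show "\<forall>x\<in>Fvec \<rat> (d X). h x \<in> hom C G X \<and> H (h x) *\<^sub>v z\<^sub>0 = x"
    proof
      fix x assume x: "x \<in> Fvec \<rat> (d X)"
      have "H (h x) *\<^sub>v z\<^sub>0 = coeff_mat n \<pi> (H k *\<^sub>v z\<^sub>0) *\<^sub>v x" using h_vec[OF x Gk(2)] by (simp add: L_def)
      then show "h x \<in> hom C G X \<and> H (h x) *\<^sub>v z\<^sub>0 = x"
        using h_hom coeff_mat_coordinate_vector[OF \<pi> n_def Hk[OF Gk(2)] coord] Fvec_carrier[OF x]
        by (simp add: n_def)
    qed
    show "\<forall>z\<in>Fvec \<rat> (d G). \<forall>x\<in>Fvec \<rat> (d X). H (h x) *\<^sub>v z = L z *\<^sub>v x"
      using h_vec by simp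
    show "\<forall>z\<in>Fvec \<rat> (d G). L z \<in> carrier_mat (d X) (d X) \<and> (\<forall>e\<in>set es. L z * H e = H e * L z)"
    proof
      fix z assume z: "z \<in> Fvec \<rat> (d G)"
      have "L z * H e = H e * L z" if e: "e \<in> set es" for e
        unfolding L_def by (rule coeff_mat_comm[OF \<pi> n_def es[OF e] Hk[OF z]]) (use defect e z in blast)
      then show "L z \<in> carrier_mat (d X) (d X) \<and> (\<forall>e\<in>set es. L z * H e = H e * L z)"
        using coeff_mat_carrier by (simp add: L_def n_def)
    qed
  qed
qed
end

section \<open>The period space\<close>

lemma Kspan_0: "0 \<in> Kspan K S"
  unfolding Kspan_def by (rule CollectI, rule exI[of _ "[]"]) auto

lemma Kspan_add: assumes "x \<in> Kspan K S" "y \<in> Kspan K S" shows "x + y \<in> Kspan K S"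
proof -
  obtain L1 where "x = sum_list (map (\<lambda>(c, r). (\<lambda>X i j. c * r X i j)) L1)" "set L1 \<subseteq> K \<times> S"
    using assms(1) unfolding Kspan_def by blast
  moreover obtain L2 where "y = sum_list (map (\<lambda>(c, r). (\<lambda>X i j. c * r X i j)) L2)" "set L2 \<subseteq> K \<times> S"
    using assms(2) unfolding Kspan_def by blast
  ultimately show ?thesis unfolding Kspan_def
    by (intro CollectI exI[of _ "L1 @ L2"]) auto
qed

lemma sum_list_scale:
  fixes L :: "(complex \<times> ('o \<Rightarrow> nat \<Rightarrow> nat \<Rightarrow> complex)) list"
  shows "(\<lambda>X i j. c * sum_list (map (\<lambda>(c, r). (\<lambda>X i j. c * r X i j)) L) X i j) =
   sum_list (map (\<lambda>(c', r). (\<lambda>X i j. c' * r X i j)) (map (\<lambda>(c', r). (c * c', r)) L))"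
  by (induction L) (auto simp: fun_eq_iff algebra_simps)

lemma Kspan_scale: assumes "x \<in> Kspan K S" "subfield_C K" "c \<in> K"
  shows "(\<lambda>X i j. c * x X i j) \<in> Kspan K S"
proof -
  obtain L where L: "x = sum_list (map (\<lambda>(c, r). (\<lambda>X i j. c * r X i j)) L)" "set L \<subseteq> K \<times> S"
    using assms(1) unfolding Kspan_def by blast
  have "set (map (\<lambda>(c', r). (c * c', r)) L) \<subseteq> K \<times> S"
    using L(2) assms(2,3) by (auto intro: subfield_mult)
  thus ?thesis unfolding Kspan_def L(1) sum_list_scale by blast
qed

lemma Kspan_uminus: assumes "x \<in> Kspan K S" "subfield_C K" shows "- x \<in> Kspan K S"
proof -
  have "(\<lambda>X i j. (-1) * x X i j) \<in> Kspan K S"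
    using Kspan_scale[OF assms(1,2)] assms(2) subfield_1 subfield_uminus by blast
  moreover have "(\<lambda>X i j. (-1) * x X i j) = - x" by (auto simp: fun_eq_iff)
  ultimately show ?thesis by simp
qed

lemma Kspan_diff: "x \<in> Kspan K S \<Longrightarrow> y \<in> Kspan K S \<Longrightarrow> subfield_C K \<Longrightarrow> x - y \<in> Kspan K S"
  using Kspan_add[of x K S "- y"] Kspan_uminus[of y K S] by simp

lemma Kspan_gen: "r \<in> S \<Longrightarrow> subfield_C K \<Longrightarrow> r \<in> Kspan K S"
  unfolding Kspan_def
  by (rule CollectI, rule exI[of _ "[(1, r)]"]) (auto simp: subfield_1 fun_eq_iff)

lemma ptensor_add_left: "s1 \<in> carrier_vec (dB M) \<Longrightarrow> s2 \<in> carrier_vec (dB M) \<Longrightarrow>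
  ptensor dB dR M (s1 + s2) w = ptensor dB dR M s1 w + ptensor dB dR M s2 w"
  by (auto simp: ptensor_def fun_eq_iff algebra_simps)
lemma ptensor_add_right: "w1 \<in> carrier_vec (dR M) \<Longrightarrow> w2 \<in> carrier_vec (dR M) \<Longrightarrow>
  ptensor dB dR M s (w1 + w2) = ptensor dB dR M s w1 + ptensor dB dR M s w2"
  by (auto simp: ptensor_def fun_eq_iff algebra_simps)
lemma ptensor_zero_right: "ptensor dB dR M s (0\<^sub>v (dR M)) = 0"
  by (auto simp: ptensor_def fun_eq_iff)
lemma ptensor_zero_left: "ptensor dB dR M (0\<^sub>v (dB M)) w = 0"
  by (auto simp: ptensor_def fun_eq_iff)

locale period_data = qlinear_abelian_cat C for C :: "('o, 'm) qcat" +
  fixes K :: "complex set" and dB dR :: "'o \<Rightarrow> nat" and HB HdR :: "'m \<Rightarrow> complex mat"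
    and I :: "'o \<Rightarrow> complex mat"
  assumes subK: "subfield_C K"
    and ffB: "fiber_functor C \<rat> dB HB"
    and ffR: "fiber_functor C K dR HdR"
    and comp: "comparison C dB HB dR HdR I"
begin

sublocale B: rational_fiber_functor C dB HB by (unfold_locales) (fact subfield_Rats, fact ffB)
sublocale R: fiber_functor_on C K dR HdR by (unfold_locales) (fact subK, fact ffR)

abbreviation "relspan \<equiv> Kspan K (period_relations C K dB HB dR HdR)"
abbreviation "pt \<equiv> ptensor dB dR"

lemma I_carrier: "I M \<in> carrier_mat (dR M) (dB M)"
  using comp unfolding comparison_def by blast
lemma I_inv: "invertible_mat (I M)"
  using comp unfolding comparison_def by blast
lemma I_nat: "I (cd f) * HB f = HdR f * I (dm f)"
  using comp unfolding comparison_def by blast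

lemma relation_in_relspan: "\<alpha> \<in> hom C M N \<Longrightarrow> \<sigma> \<in> Fvec \<rat> (dB M) \<Longrightarrow> \<omega> \<in> Fvec K (dR N) \<Longrightarrow>
   pt M \<sigma> (dual_map (HdR \<alpha>) \<omega>) - pt N (HB \<alpha> *\<^sub>v \<sigma>) \<omega> \<in> relspan"
  by (rule Kspan_gen[OF _ subK]) (unfold period_relations_def, blast)

lemma dual_Fvec: "\<omega> \<in> Fvec K (dR (cd f)) \<Longrightarrow> dual_map (HdR f) \<omega> \<in> Fvec K (dR (dm f))"
  unfolding dual_map_def by (rule Fmat_mult_vec[OF subK Fmat_transpose[OF R.H_Fmat]])

lemma dual_comp: assumes "cd f = dm g" "\<omega> \<in> carrier_vec (dR (cd g))"
  shows "dual_map (HdR f) (dual_map (HdR g) \<omega>) = dual_map (HdR (cmp g f)) \<omega>"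
proof -
  have f: "HdR f \<in> carrier_mat (dR (dm g)) (dR (dm f))" using R.H_carrier[of f] assms by simp
  have g: "HdR g \<in> carrier_mat (dR (cd g)) (dR (dm g))" using R.H_carrier[of g] by simp
  have "dual_map (HdR (cmp g f)) \<omega> = transpose_mat (HdR g * HdR f) *\<^sub>v \<omega>"
    unfolding dual_map_def R.H_comp[OF assms(1)] ..
  also have "\<dots> = (transpose_mat (HdR f) * transpose_mat (HdR g)) *\<^sub>v \<omega>"
    using transpose_mult[OF g f] by simp
  also have "\<dots> = transpose_mat (HdR f) *\<^sub>v (transpose_mat (HdR g) *\<^sub>v \<omega>)"
    by (rule assoc_mult_mat_vec) (use f g assms in auto)
  finally show ?thesis unfolding dual_map_def by simp
qed

lemma dual_zero: "\<omega> \<in> carrier_vec (dR Y) \<Longrightarrow> dual_map (HdR (zr X Y)) \<omega> = 0\<^sub>v (dR X)"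
  unfolding dual_map_def by (auto intro!: eq_vecI simp: scalar_prod_def)

lemma dual_id: "\<omega> \<in> carrier_vec (dR X) \<Longrightarrow> dual_map (HdR (cid C X)) \<omega> = \<omega>"
  unfolding dual_map_def by simp

lemma comparison_natural_vec:
  assumes \<alpha>: "\<alpha> \<in> hom C M N" and w: "w \<in> carrier_vec (dB M)"
  shows "I N *\<^sub>v (HB \<alpha> *\<^sub>v w) = HdR \<alpha> *\<^sub>v (I M *\<^sub>v w)"
proof -
  have d: "dm \<alpha> = M" "cd \<alpha> = N" using \<alpha> by (auto simp: hom_iff)
  have Ba: "HB \<alpha> \<in> carrier_mat (dB N) (dB M)" using B.H_carrier[of \<alpha>] d by simp
  have Ra: "HdR \<alpha> \<in> carrier_mat (dR N) (dR M)" using R.H_carrier[of \<alpha>] d by simp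
  have "I N *\<^sub>v (HB \<alpha> *\<^sub>v w) = (I N * HB \<alpha>) *\<^sub>v w"
    using assoc_mult_mat_vec[OF I_carrier[of N] Ba w] by simp
  also have "I N * HB \<alpha> = HdR \<alpha> * I M" using I_nat[of \<alpha>] d by simp
  also have "(HdR \<alpha> * I M) *\<^sub>v w = HdR \<alpha> *\<^sub>v (I M *\<^sub>v w)"
    using assoc_mult_mat_vec[OF Ra I_carrier[of M] w] by simp
  finally show ?thesis .
qed

lemma HB_comp_vec: "f \<in> hom C A B' \<Longrightarrow> g \<in> hom C B' D \<Longrightarrow> v \<in> carrier_vec (dB A) \<Longrightarrow>
   HB g *\<^sub>v (HB f *\<^sub>v v) = HB (cmp g f) *\<^sub>v v"
  using B.H_mult_vec_comp[of f g v] by (simp add: hom_iff)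

lemma HB_mult_carrier: "f \<in> hom C A B' \<Longrightarrow> v \<in> carrier_vec (dB A) \<Longrightarrow> HB f *\<^sub>v v \<in> carrier_vec (dB B')"
  using B.H_carrier[of f] by (auto simp: hom_iff)

subsection \<open>Condition (B) implies the period conjecture\<close>

lemma relation_through:
  assumes i: "i \<in> hom C Z S" and p: "p \<in> hom C S Z'"
    and \<sigma>: "\<sigma> \<in> Fvec \<rat> (dB Z)" and \<omega>: "\<omega> \<in> Fvec K (dR Z')"
  shows "pt Z \<sigma> (dual_map (HdR (cmp p i)) \<omega>) - pt S (HB i *\<^sub>v \<sigma>) (dual_map (HdR p) \<omega>) \<in> relspan"
    and "period I S (HB i *\<^sub>v \<sigma>) (dual_map (HdR p) \<omega>) = period I Z' (HB (cmp p i) *\<^sub>v \<sigma>) \<omega>"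
proof -
  have hd: "dm i = Z" "cd i = S" "dm p = S" "cd p = Z'" using i p by (auto simp: hom_iff)
  have p\<omega>: "dual_map (HdR p) \<omega> \<in> Fvec K (dR S)" using dual_Fvec[of \<omega> p] \<omega> hd by simp
  show "pt Z \<sigma> (dual_map (HdR (cmp p i)) \<omega>) - pt S (HB i *\<^sub>v \<sigma>) (dual_map (HdR p) \<omega>) \<in> relspan"
    using relation_in_relspan[OF i \<sigma> p\<omega>] dual_comp[of i p \<omega>] hd Fvec_carrier[OF \<omega>] by simp
  have i\<sigma>: "HB i *\<^sub>v \<sigma> \<in> carrier_vec (dB S)" using HB_mult_carrier[OF i Fvec_carrier[OF \<sigma>]] .
  have "dual_map (HdR p) \<omega> \<bullet> (I S *\<^sub>v (HB i *\<^sub>v \<sigma>)) = \<omega> \<bullet> (HdR p *\<^sub>v (I S *\<^sub>v (HB i *\<^sub>v \<sigma>)))"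
    unfolding dual_map_def
    by (rule transpose_vec_mult_scalar) (use R.H_carrier[of p] hd I_carrier[of S] i\<sigma> Fvec_carrier[OF \<omega>] in auto)
  also have "HdR p *\<^sub>v (I S *\<^sub>v (HB i *\<^sub>v \<sigma>)) = I Z' *\<^sub>v (HB (cmp p i) *\<^sub>v \<sigma>)"
    using comparison_natural_vec[OF p i\<sigma>] HB_comp_vec[OF i p Fvec_carrier[OF \<sigma>]] by simp
  finally show "period I S (HB i *\<^sub>v \<sigma>) (dual_map (HdR p) \<omega>) = period I Z' (HB (cmp p i) *\<^sub>v \<sigma>) \<omega>"
    unfolding period_def .
qed

text \<open>On a biproduct \<open>S = M \<oplus> X\<close>, the sum of two pure tensors is congruent modulo the relations
  to the single pure tensor \<open>(i\<^sub>1\<sigma>\<^sub>1 + i\<^sub>2\<sigma>\<^sub>2) \<otimes> (p\<^sub>1\<^sup>\<or>\<omega>\<^sub>1 + p\<^sub>2\<^sup>\<or>\<omega>\<^sub>2)\<close>: the two cross terms are relations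
  through the zero maps \<open>p\<^sub>2 i\<^sub>1\<close> and \<open>p\<^sub>1 i\<^sub>2\<close>.\<close>
lemma pure_tensor_pair_merge:
  assumes \<sigma>1: "\<sigma>1 \<in> Fvec \<rat> (dB M)" and \<omega>1: "\<omega>1 \<in> Fvec K (dR M)"
    and \<sigma>2: "\<sigma>2 \<in> Fvec \<rat> (dB X)" and \<omega>2: "\<omega>2 \<in> Fvec K (dR X)"
  obtains \<sigma> S \<omega> where "\<sigma> \<in> Fvec \<rat> (dB S)" "\<omega> \<in> Fvec K (dR S)"
    "pt M \<sigma>1 \<omega>1 + pt X \<sigma>2 \<omega>2 - pt S \<sigma> \<omega> \<in> relspan"
    "period I M \<sigma>1 \<omega>1 + period I X \<sigma>2 \<omega>2 = period I S \<sigma> \<omega>"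
proof -
  obtain S i1 i2 p1 p2 where b: "i1 \<in> hom C M S" "i2 \<in> hom C X S" "p1 \<in> hom C S M" "p2 \<in> hom C S X"
    "cmp p1 i1 = cid C M" "cmp p2 i2 = cid C X" "cmp p1 i2 = zr X M" "cmp p2 i1 = zr M X"
    using binary_biproduct[of M X] by blast
  have hd: "dm i1 = M" "cd i1 = S" "dm i2 = X" "cd i2 = S" "dm p1 = S" "cd p1 = M" "dm p2 = S" "cd p2 = X"
    using b by (auto simp: hom_iff)
  define a1 a2 w1 w2 where "a1 = HB i1 *\<^sub>v \<sigma>1" and "a2 = HB i2 *\<^sub>v \<sigma>2"
    and "w1 = dual_map (HdR p1) \<omega>1" and "w2 = dual_map (HdR p2) \<omega>2"
  have a: "a1 \<in> Fvec \<rat> (dB S)" "a2 \<in> Fvec \<rat> (dB S)"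
    using B.H_mult_Fvec[of \<sigma>1 i1] B.H_mult_Fvec[of \<sigma>2 i2] \<sigma>1 \<sigma>2 hd by (simp_all add: a1_def a2_def)
  have w: "w1 \<in> Fvec K (dR S)" "w2 \<in> Fvec K (dR S)"
    using dual_Fvec[of \<omega>1 p1] dual_Fvec[of \<omega>2 p2] \<omega>1 \<omega>2 hd by (simp_all add: w1_def w2_def)
  note c = Fvec_carrier[OF a(1)] Fvec_carrier[OF a(2)] Fvec_carrier[OF w(1)] Fvec_carrier[OF w(2)]
    Fvec_carrier[OF \<sigma>1] Fvec_carrier[OF \<omega>1] Fvec_carrier[OF \<sigma>2] Fvec_carrier[OF \<omega>2]
  note r11 = relation_through[OF b(1) b(3) \<sigma>1 \<omega>1, folded a1_def w1_def]
    and r12 = relation_through[OF b(1) b(4) \<sigma>1 \<omega>2, folded a1_def w2_def]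
    and r21 = relation_through[OF b(2) b(3) \<sigma>2 \<omega>1, folded a2_def w1_def]
    and r22 = relation_through[OF b(2) b(4) \<sigma>2 \<omega>2, folded a2_def w2_def]
  have IS: "I S \<in> carrier_mat (dR S) (dB S)" by (rule I_carrier)
  show ?thesis
  proof (rule that[where S=S and \<sigma>="a1 + a2" and \<omega>="w1 + w2"])
    show "a1 + a2 \<in> Fvec \<rat> (dB S)" by (rule Fvec_add[OF subfield_Rats a])
    show "w1 + w2 \<in> Fvec K (dR S)" by (rule Fvec_add[OF subK w])
    have "pt M \<sigma>1 \<omega>1 + pt X \<sigma>2 \<omega>2 - pt S (a1 + a2) (w1 + w2) =
      (pt M \<sigma>1 \<omega>1 - pt S a1 w1) + (0 - pt S a1 w2) + (0 - pt S a2 w1) + (pt X \<sigma>2 \<omega>2 - pt S a2 w2)"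
      using c by (simp add: ptensor_add_left ptensor_add_right algebra_simps)
    also have "\<dots> \<in> relspan"
      using r11(1) r12(1) r21(1) r22(1) b(5-8) dual_zero dual_id c
      by (intro Kspan_add) (simp_all add: ptensor_zero_right)
    finally show "pt M \<sigma>1 \<omega>1 + pt X \<sigma>2 \<omega>2 - pt S (a1 + a2) (w1 + w2) \<in> relspan" .
    have "period I S (a1 + a2) (w1 + w2) =
      period I S a1 w1 + period I S a1 w2 + period I S a2 w1 + period I S a2 w2"
      using c IS by (simp add: period_def mult_add_distrib_mat_vec
          add_scalar_prod_distrib[of _ "dR S"] scalar_prod_add_distrib[of _ "dR S"])
    also have "\<dots> = period I M \<sigma>1 \<omega>1 + period I X \<sigma>2 \<omega>2"
      using r11(2) r12(2) r21(2) r22(2) b(5-8) c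
      by (simp add: period_def mult_vec_zero[OF I_carrier])
    finally show "period I M \<sigma>1 \<omega>1 + period I X \<sigma>2 \<omega>2 = period I S (a1 + a2) (w1 + w2)" by simp
  qed
qed

lemma reduce_to_pure_tensor:
  assumes "\<forall>(M, \<sigma>, \<omega>)\<in>set L. \<sigma> \<in> Fvec \<rat> (dB M) \<and> \<omega> \<in> Fvec K (dR M)"
  shows "\<exists>X \<sigma> \<omega>. \<sigma> \<in> Fvec \<rat> (dB X) \<and> \<omega> \<in> Fvec K (dR X) \<and>
     sum_list (map (\<lambda>(M, \<sigma>, \<omega>). pt M \<sigma> \<omega>) L) - pt X \<sigma> \<omega> \<in> relspan \<and>
     sum_list (map (\<lambda>(M, \<sigma>, \<omega>). period I M \<sigma> \<omega>) L) = period I X \<sigma> \<omega>"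
  using assms
proof (induction L)
  case Nil
  let ?X = "undefined :: 'o"
  have "0\<^sub>v (dB ?X) \<in> Fvec \<rat> (dB ?X) \<and> 0\<^sub>v (dR ?X) \<in> Fvec K (dR ?X) \<and>
      0 - pt ?X (0\<^sub>v (dB ?X)) (0\<^sub>v (dR ?X)) \<in> relspan \<and> 0 = period I ?X (0\<^sub>v (dB ?X)) (0\<^sub>v (dR ?X))"
    using zero_Fvec[OF subfield_Rats, of "dB ?X"] zero_Fvec[OF subK, of "dR ?X"] Kspan_0
      ptensor_zero_left[of dB dR] I_carrier[of ?X]
    by (simp add: period_def)
  then show ?case unfolding list.map sum_list.Nil by blast
next
  case (Cons a L)
  obtain M \<sigma>1 \<omega>1 where a: "a = (M, \<sigma>1, \<omega>1)" by (cases a)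
  obtain X \<sigma>2 \<omega>2 where IH: "\<sigma>2 \<in> Fvec \<rat> (dB X)" "\<omega>2 \<in> Fvec K (dR X)"
     "sum_list (map (\<lambda>(M, \<sigma>, \<omega>). pt M \<sigma> \<omega>) L) - pt X \<sigma>2 \<omega>2 \<in> relspan"
     "sum_list (map (\<lambda>(M, \<sigma>, \<omega>). period I M \<sigma> \<omega>) L) = period I X \<sigma>2 \<omega>2"
    using Cons.IH Cons.prems by (meson list.set_intros(2))
  obtain S \<sigma> \<omega> where m: "\<sigma> \<in> Fvec \<rat> (dB S)" "\<omega> \<in> Fvec K (dR S)"
    "pt M \<sigma>1 \<omega>1 + pt X \<sigma>2 \<omega>2 - pt S \<sigma> \<omega> \<in> relspan"
    "period I M \<sigma>1 \<omega>1 + period I X \<sigma>2 \<omega>2 = period I S \<sigma> \<omega>"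
    by (rule pure_tensor_pair_merge[OF _ _ IH(1,2)]) (use Cons.prems a in auto)
  have "(pt M \<sigma>1 \<omega>1 + pt X \<sigma>2 \<omega>2 - pt S \<sigma> \<omega>) +
      (sum_list (map (\<lambda>(M, \<sigma>, \<omega>). pt M \<sigma> \<omega>) L) - pt X \<sigma>2 \<omega>2) \<in> relspan"
    using m(3) IH(3) by (rule Kspan_add)
  then have "sum_list (map (\<lambda>(M, \<sigma>, \<omega>). pt M \<sigma> \<omega>) (a # L)) - pt S \<sigma> \<omega> \<in> relspan"
    using a by (simp add: algebra_simps)
  moreover have "sum_list (map (\<lambda>(M, \<sigma>, \<omega>). period I M \<sigma> \<omega>) (a # L)) = period I S \<sigma> \<omega>"
    using a m(4) IH(4) by simp
  ultimately show ?case using m(1,2) by blast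
qed

lemma period_conjecture_if_periods_split:
  assumes split: "\<forall>M \<sigma> \<omega>. \<sigma> \<in> Fvec \<rat> (dB M) \<longrightarrow> \<omega> \<in> Fvec K (dR M) \<longrightarrow> period I M \<sigma> \<omega> = 0 \<longrightarrow>
       (\<exists>N' N s p. s \<in> hom C N' M \<and> p \<in> hom C M N \<and> short_exact C s p \<and>
          (\<exists>\<tau>\<in>Fvec \<rat> (dB N'). \<sigma> = HB s *\<^sub>v \<tau>) \<and>
          (\<exists>\<eta>\<in>Fvec K (dR N). \<omega> = dual_map (HdR p) \<eta>))"
  shows "period_conjecture C K dB HB dR HdR I"
  unfolding period_conjecture_def
proof (intro allI impI)
  fix L :: "('o \<times> complex vec \<times> complex vec) list"
  assume L: "\<forall>(M, \<sigma>, \<omega>)\<in>set L. \<sigma> \<in> Fvec \<rat> (dB M) \<and> \<omega> \<in> Fvec K (dR M)"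
    and z: "sum_list (map (\<lambda>(M, \<sigma>, \<omega>). period I M \<sigma> \<omega>) L) = 0"
  obtain X \<sigma> \<omega> where r: "\<sigma> \<in> Fvec \<rat> (dB X)" "\<omega> \<in> Fvec K (dR X)"
     "sum_list (map (\<lambda>(M, \<sigma>, \<omega>). pt M \<sigma> \<omega>) L) - pt X \<sigma> \<omega> \<in> relspan"
     "sum_list (map (\<lambda>(M, \<sigma>, \<omega>). period I M \<sigma> \<omega>) L) = period I X \<sigma> \<omega>"
    using reduce_to_pure_tensor[OF L] by blast
  obtain N' N s p \<tau> \<eta> where e: "s \<in> hom C N' X" "p \<in> hom C X N" "short_exact C s p"
     "\<tau> \<in> Fvec \<rat> (dB N')" "\<sigma> = HB s *\<^sub>v \<tau>" "\<eta> \<in> Fvec K (dR N)" "\<omega> = dual_map (HdR p) \<eta>"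
    using split r z by metis
  have "cmp p s = zr N' N"
    using kernelD(2)[of s p] e(1-3) by (auto simp: short_exact_def hom_iff)
  then have "0 - pt X \<sigma> \<omega> \<in> relspan"
    using relation_through(1)[OF e(1,2,4,6)] e(5,7) dual_zero Fvec_carrier[OF e(6)]
    by (simp add: ptensor_zero_right)
  from Kspan_diff[OF r(3) this subK]
  show "sum_list (map (\<lambda>(M, \<sigma>, \<omega>). pt M \<sigma> \<omega>) L) \<in> relspan" by simp
qed

subsection \<open>The period conjecture implies condition (B)\<close>

abbreviation relation_tensor :: "'o \<Rightarrow> 'o \<Rightarrow> 'm \<Rightarrow> complex vec \<Rightarrow> complex vec \<Rightarrow> 'o \<Rightarrow> nat \<Rightarrow> nat \<Rightarrow> complex" where
  "relation_tensor M N \<alpha> \<tau> \<eta> \<equiv> pt M \<tau> (dual_map (HdR \<alpha>) \<eta>) - pt N (HB \<alpha> *\<^sub>v \<tau>) \<eta>"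

definition relation_comb :: "(complex \<times> 'o \<times> 'o \<times> 'm \<times> complex vec \<times> complex vec) list \<Rightarrow> 'o \<Rightarrow> nat \<Rightarrow> nat \<Rightarrow> complex" where
  "relation_comb R = sum_list (map (\<lambda>(c,M,N,\<alpha>,\<tau>,\<eta>). (\<lambda>X i j. c * relation_tensor M N \<alpha> \<tau> \<eta> X i j)) R)"

definition valid_relation_comb :: "(complex \<times> 'o \<times> 'o \<times> 'm \<times> complex vec \<times> complex vec) list \<Rightarrow> bool" where
  "valid_relation_comb R \<longleftrightarrow> (\<forall>(c,M,N,\<alpha>,\<tau>,\<eta>)\<in>set R. c \<in> K \<and> \<alpha> \<in> hom C M N \<and> \<tau> \<in> Fvec \<rat> (dB M) \<and> \<eta> \<in> Fvec K (dR N))"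

lemma Kspan_relations_relation_comb: "set L \<subseteq> K \<times> period_relations C K dB HB dR HdR \<Longrightarrow>
   \<exists>R. valid_relation_comb R \<and> sum_list (map (\<lambda>(c, r). (\<lambda>X i j. c * r X i j)) L) = relation_comb R"
proof (induction L)
  case Nil then show ?case by (intro exI[of _ "[]"]) (simp add: valid_relation_comb_def relation_comb_def)
next
  case (Cons a L)
  obtain c r where a: "a = (c, r)" by (cases a)
  have c: "c \<in> K" and r: "r \<in> period_relations C K dB HB dR HdR" using Cons.prems a by auto
  obtain M N \<alpha> \<tau> \<eta> where rr: "r = relation_tensor M N \<alpha> \<tau> \<eta>" "\<alpha> \<in> hom C M N" "\<tau> \<in> Fvec \<rat> (dB M)" "\<eta> \<in> Fvec K (dR N)"
    using r unfolding period_relations_def by blast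
  obtain R where R: "valid_relation_comb R" "sum_list (map (\<lambda>(c, r). (\<lambda>X i j. c * r X i j)) L) = relation_comb R"
    using Cons.IH Cons.prems by auto
  show ?case
    apply (rule exI[of _ "(c,M,N,\<alpha>,\<tau>,\<eta>) # R"])
    using R c rr a unfolding valid_relation_comb_def relation_comb_def by simp
qed

lemma relspan_relation_comb: "x \<in> relspan \<Longrightarrow> \<exists>R. valid_relation_comb R \<and> x = relation_comb R"
  using Kspan_relations_relation_comb unfolding Kspan_def by blast

text \<open>The functional on the direct sum induced by a family \<open>u Z\<close> of maps \<open>H\<^sub>B(Z) \<rightarrow> H\<^sub>d\<^sub>R(Z) \<otimes> \<complex>\<close>,
  restricted to the objects in \<open>zs\<close>; for \<open>u = I\<close> it is \<open>eval\<close>.\<close>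
definition pairing :: "'o list \<Rightarrow> ('o \<Rightarrow> complex mat) \<Rightarrow> ('o \<Rightarrow> nat \<Rightarrow> nat \<Rightarrow> complex) \<Rightarrow> complex" where
  "pairing zs u F = (\<Sum>Z\<in>set zs. \<Sum>a<dB Z. \<Sum>b<dR Z. F Z a b * u Z $$ (b,a))"

lemma pairing_add: "pairing zs u (F + G) = pairing zs u F + pairing zs u G"
  unfolding pairing_def by (simp add: distrib_right sum.distrib)
lemma pairing_diff: "pairing zs u (F - G) = pairing zs u F - pairing zs u G"
  unfolding pairing_def by (simp add: left_diff_distrib sum_subtractf)
lemma pairing_scale: "pairing zs u (\<lambda>X i j. c * F X i j) = c * pairing zs u F"
  unfolding pairing_def by (simp add: sum_distrib_left mult.assoc)
lemma pairing_relation_comb: "pairing zs u (relation_comb R) = (\<Sum>(c,M,N,\<alpha>,\<tau>,\<eta>)\<leftarrow>R. c * pairing zs u (relation_tensor M N \<alpha> \<tau> \<eta>))"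
proof (induction R)
  case Nil then show ?case by (simp add: relation_comb_def pairing_def)
next
  case (Cons a R)
  obtain c M N \<alpha> \<tau> \<eta> where a: "a = (c,M,N,\<alpha>,\<tau>,\<eta>)" by (cases a)
  have e: "relation_comb (a # R) = (\<lambda>X i j. c * relation_tensor M N \<alpha> \<tau> \<eta> X i j) + relation_comb R" using a by (simp add: relation_comb_def)
  have "pairing zs u (relation_comb (a # R)) = c * pairing zs u (relation_tensor M N \<alpha> \<tau> \<eta>) + pairing zs u (relation_comb R)"
    unfolding e pairing_add pairing_scale ..
  thus ?case unfolding Cons.IH a by (simp only: list.map sum_list.Cons prod.case)
qed

lemma pairing_ptensor: assumes Z: "Z \<in> set zs" and \<tau>: "\<tau> \<in> carrier_vec (dB Z)" and \<eta>: "\<eta> \<in> carrier_vec (dR Z)"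
  and u: "u Z \<in> carrier_mat (dR Z) (dB Z)"
  shows "pairing zs u (pt Z \<tau> \<eta>) = \<eta> \<bullet> (u Z *\<^sub>v \<tau>)"
proof -
  define T where "T = (\<Sum>a<dB Z. \<Sum>b<dR Z. \<tau> $ a * \<eta> $ b * u Z $$ (b,a))"
  have "pairing zs u (pt Z \<tau> \<eta>) = (\<Sum>Z'\<in>set zs. if Z' = Z then T else 0)"
    unfolding pairing_def T_def by (rule sum.cong) (auto simp: ptensor_def)
  also have "\<dots> = T" using Z by simp
  also have "T = (\<Sum>b<dR Z. \<Sum>a<dB Z. \<tau> $ a * \<eta> $ b * u Z $$ (b,a))" unfolding T_def by (rule sum.swap)
  also have "\<dots> = (\<Sum>b<dR Z. \<eta> $ b * (\<Sum>a<dB Z. u Z $$ (b,a) * \<tau> $ a))"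
    by (simp add: sum_distrib_left ac_simps)
  also have "\<dots> = (\<Sum>b<dR Z. \<eta> $ b * (u Z *\<^sub>v \<tau>) $ b)"
    by (rule sum.cong) (use mult_mat_vec_index_sum[OF u \<tau>] in auto)
  also have "\<dots> = \<eta> \<bullet> (u Z *\<^sub>v \<tau>)"
    unfolding scalar_prod_def using u by (simp add: atLeast0LessThan)
  finally show ?thesis .
qed

lemma pairing_relation_tensor:
  assumes M: "M \<in> set zs" and N: "N \<in> set zs" and \<alpha>: "\<alpha> \<in> hom C M N"
    and \<tau>: "\<tau> \<in> carrier_vec (dB M)" and \<eta>: "\<eta> \<in> carrier_vec (dR N)"
    and uM: "u M \<in> carrier_mat (dR M) (dB M)" and uN: "u N \<in> carrier_mat (dR N) (dB N)"
    and nat: "HdR \<alpha> *\<^sub>v (u M *\<^sub>v \<tau>) = u N *\<^sub>v (HB \<alpha> *\<^sub>v \<tau>)"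
  shows "pairing zs u (relation_tensor M N \<alpha> \<tau> \<eta>) = 0"
proof -
  have hd: "dm \<alpha> = M" "cd \<alpha> = N" using \<alpha> by (auto simp: hom_iff)
  have Ra: "HdR \<alpha> \<in> carrier_mat (dR N) (dR M)" using R.H_carrier[of \<alpha>] hd by simp
  have Ba: "HB \<alpha> \<in> carrier_mat (dB N) (dB M)" using B.H_carrier[of \<alpha>] hd by simp
  have d: "dual_map (HdR \<alpha>) \<eta> \<in> carrier_vec (dR M)" unfolding dual_map_def using Ra \<eta> by simp
  have "pairing zs u (pt M \<tau> (dual_map (HdR \<alpha>) \<eta>)) = dual_map (HdR \<alpha>) \<eta> \<bullet> (u M *\<^sub>v \<tau>)"
    by (rule pairing_ptensor[where u=u, OF M \<tau> d uM])
  also have "\<dots> = \<eta> \<bullet> (HdR \<alpha> *\<^sub>v (u M *\<^sub>v \<tau>))"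
    unfolding dual_map_def by (rule transpose_vec_mult_scalar[OF Ra _ \<eta>]) (use uM \<tau> in simp)
  also have "\<dots> = \<eta> \<bullet> (u N *\<^sub>v (HB \<alpha> *\<^sub>v \<tau>))" using nat by simp
  also have "\<dots> = pairing zs u (pt N (HB \<alpha> *\<^sub>v \<tau>) \<eta>)"
    by (rule pairing_ptensor[where u=u, OF N _ \<eta> uN, symmetric]) (use Ba \<tau> in simp)
  finally show ?thesis by (simp add: pairing_diff)
qed

text \<open>Since \<open>I\<^sub>N\<^sub>'\<close> is invertible, \<open>\<omega>\<close> vanishing on \<open>I\<^sub>M(H\<^sub>B(s)(H\<^sub>B(N')))\<close> vanishes on the image of
  \<open>H\<^sub>d\<^sub>R(s)\<close>, i.e. on the kernel of \<open>H\<^sub>d\<^sub>R(p)\<close>.\<close>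
lemma dual_map_if_annihilates_image:
  assumes s: "s \<in> hom C N' M" and p: "p \<in> hom C M N" and ses: "short_exact C s p"
    and \<omega>: "\<omega> \<in> Fvec K (dR M)"
    and orth: "\<forall>u\<in>Fvec \<rat> (dB N'). \<omega> \<bullet> (I M *\<^sub>v (HB s *\<^sub>v u)) = 0"
  shows "\<exists>\<eta>\<in>Fvec K (dR N). \<omega> = dual_map (HdR p) \<eta>"
proof -
  have hd: "dm s = N'" "cd s = M" "dm p = M" "cd p = N" using s p by (auto simp: hom_iff)
  have \<omega>c: "\<omega> \<in> carrier_vec (dR M)" using Fvec_carrier[OF \<omega>] .
  have A: "I M * HB s \<in> carrier_mat (dR M) (dB N')"
    using I_carrier[of M] B.H_carrier[of s] hd by auto
  have Az: "\<omega> \<bullet> ((I M * HB s) *\<^sub>v z) = 0" if z: "z \<in> carrier_vec (dB N')" for z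
  proof (rule scalar_prod_mult_mat_vec_eq_0[OF A \<omega>c _ z])
    fix k assume k: "k < dB N'"
    then show "\<omega> \<bullet> ((I M * HB s) *\<^sub>v unit_vec (dB N') k) = 0"
      using orth unit_Fvec[OF subfield_Rats k] I_carrier[of M] B.H_carrier[of s] hd
      by (simp add: assoc_mult_mat_vec)
  qed
  have image: "\<omega> \<bullet> (HdR s *\<^sub>v w) = 0" if w: "w \<in> carrier_vec (dR N')" for w
  proof -
    have IN: "I N' \<in> carrier_mat (dR N') (dR N')" and dBdR: "dB N' = dR N'"
      using I_carrier[of N'] I_inv[of N'] unfolding invertible_mat_def square_mat.simps by auto
    obtain z where z: "z \<in> carrier_vec (dR N')" "I N' *\<^sub>v z = w"
      using invertible_mat_mult_vec_surj[OF IN I_inv w] by blast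
    have "HdR s *\<^sub>v w = I M *\<^sub>v (HB s *\<^sub>v z)"
      using comparison_natural_vec[OF s, of z] z dBdR by simp
    then show ?thesis
      using Az[of z] z dBdR I_carrier[of M] B.H_carrier[of s] hd by (simp add: assoc_mult_mat_vec)
  qed
  have "\<exists>\<eta>\<in>Fvec K (dR N). \<omega> = transpose_mat (HdR p) *\<^sub>v \<eta>"
  proof (rule transpose_mult_vec_if_orthogonal_kernel[OF subK _ _ \<omega>])
    show "HdR p \<in> Fmat K (dR N) (dR M)" using R.H_Fmat[of p] hd by simp
    show "\<exists>v\<in>Fvec K (dR M). HdR p *\<^sub>v v = unit_vec (dR N) l" if "l < dR N" for l
      using R.short_exact_H_surj[OF ses, of "unit_vec (dR N) l"] unit_Fvec[OF subK that] hd by auto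
    fix x assume "x \<in> Fvec K (dR M)" "HdR p *\<^sub>v x = 0\<^sub>v (dR N)"
    then obtain w where "w \<in> Fvec K (dR N')" "HdR s *\<^sub>v w = x"
      using R.short_exact_H_exact[OF ses, of x] hd by auto
    then show "\<omega> \<bullet> x = 0" using image Fvec_carrier by blast
  qed
  then show ?thesis unfolding dual_map_def .
qed

definition twisted_comparison :: "('o \<Rightarrow> 'm) \<Rightarrow> ('o \<Rightarrow> 'm) \<Rightarrow> complex mat \<Rightarrow> 'o \<Rightarrow> complex mat" where
  "twisted_comparison \<iota> \<rho> L Z = I Z * (HB (\<rho> Z) * (L * HB (\<iota> Z)))"

context
  fixes zs :: "'o list" and X :: 'o and \<iota> \<rho> :: "'o \<Rightarrow> 'm" and L :: "complex mat"
  assumes retract: "\<And>Z. Z \<in> set zs \<Longrightarrow> \<iota> Z \<in> hom C Z X \<and> \<rho> Z \<in> hom C X Z \<and> cmp (\<rho> Z) (\<iota> Z) = cid C Z"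
    and L: "L \<in> carrier_mat (dB X) (dB X)"
begin

lemma twisted_comparison_carrier:
  "Z \<in> set zs \<Longrightarrow> twisted_comparison \<iota> \<rho> L Z \<in> carrier_mat (dR Z) (dB Z)"
  unfolding twisted_comparison_def
  using I_carrier[of Z] B.H_carrier[of "\<iota> Z"] B.H_carrier[of "\<rho> Z"] retract[of Z] L
  by (auto simp: hom_iff)

lemma twisted_comparison_mult_vec:
  assumes Z: "Z \<in> set zs" and \<tau>: "\<tau> \<in> carrier_vec (dB Z)"
  shows "twisted_comparison \<iota> \<rho> L Z *\<^sub>v \<tau> = I Z *\<^sub>v (HB (\<rho> Z) *\<^sub>v (L *\<^sub>v (HB (\<iota> Z) *\<^sub>v \<tau>)))"
proof -
  have Hi: "HB (\<iota> Z) \<in> carrier_mat (dB X) (dB Z)" "HB (\<rho> Z) \<in> carrier_mat (dB Z) (dB X)"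
    using B.H_carrier[of "\<iota> Z"] B.H_carrier[of "\<rho> Z"] retract[OF Z] by (auto simp: hom_iff)
  have c1: "L * HB (\<iota> Z) \<in> carrier_mat (dB X) (dB Z)" using L Hi by auto
  have c2: "HB (\<rho> Z) * (L * HB (\<iota> Z)) \<in> carrier_mat (dB Z) (dB Z)" using c1 Hi by auto
  show ?thesis
    unfolding twisted_comparison_def
    using assoc_mult_mat_vec[OF I_carrier c2 \<tau>] assoc_mult_mat_vec[OF Hi(2) c1 \<tau>]
      assoc_mult_mat_vec[OF L Hi(1) \<tau>]
    by simp
qed

lemma twisted_comparison_natural:
  assumes M: "M \<in> set zs" and N: "N \<in> set zs" and \<alpha>: "\<alpha> \<in> hom C M N"
    and comm: "L * HB (cmp (\<iota> N) (cmp \<alpha> (\<rho> M))) = HB (cmp (\<iota> N) (cmp \<alpha> (\<rho> M))) * L"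
    and \<tau>: "\<tau> \<in> carrier_vec (dB M)"
  shows "HdR \<alpha> *\<^sub>v (twisted_comparison \<iota> \<rho> L M *\<^sub>v \<tau>) = twisted_comparison \<iota> \<rho> L N *\<^sub>v (HB \<alpha> *\<^sub>v \<tau>)"
proof -
  note rM = retract[OF M] and rN = retract[OF N]
  define e where "e = cmp (\<iota> N) (cmp \<alpha> (\<rho> M))"
  have E: "HB e \<in> carrier_mat (dB X) (dB X)"
    using B.H_carrier[of e] comp_hom[OF comp_hom[OF conjunct1[OF conjunct2[OF rM]] \<alpha>] conjunct1[OF rN]]
    by (simp add: e_def hom_iff)
  have e_vec: "HB e *\<^sub>v y = HB (\<iota> N) *\<^sub>v (HB \<alpha> *\<^sub>v (HB (\<rho> M) *\<^sub>v y))" if y: "y \<in> carrier_vec (dB X)" for y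
    using HB_comp_vec[OF comp_hom[OF conjunct1[OF conjunct2[OF rM]] \<alpha>] conjunct1[OF rN] y]
      HB_comp_vec[OF conjunct1[OF conjunct2[OF rM]] \<alpha> y]
    by (simp add: e_def)
  define x where "x = HB (\<iota> M) *\<^sub>v \<tau>"
  have x: "x \<in> carrier_vec (dB X)" unfolding x_def using HB_mult_carrier rM \<tau> by blast
  have \<rho>x: "HB (\<rho> M) *\<^sub>v x = \<tau>" unfolding x_def using HB_comp_vec[of "\<iota> M" M X "\<rho> M" M \<tau>] rM \<tau> by simp
  have Lx: "L *\<^sub>v x \<in> carrier_vec (dB X)" using L x by simp
  have \<rho>Lx: "HB (\<rho> M) *\<^sub>v (L *\<^sub>v x) \<in> carrier_vec (dB M)" using HB_mult_carrier rM Lx by blast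
  have "twisted_comparison \<iota> \<rho> L N *\<^sub>v (HB \<alpha> *\<^sub>v \<tau>) = I N *\<^sub>v (HB (\<rho> N) *\<^sub>v (L *\<^sub>v (HB e *\<^sub>v x)))"
    using twisted_comparison_mult_vec[OF N HB_mult_carrier[OF \<alpha> \<tau>]] e_vec[OF x] \<rho>x by simp
  also have "L *\<^sub>v (HB e *\<^sub>v x) = (L * HB e) *\<^sub>v x" using assoc_mult_mat_vec[OF L E x] by simp
  also have "L * HB e = HB e * L" using comm by (simp add: e_def)
  also have "(HB e * L) *\<^sub>v x = HB e *\<^sub>v (L *\<^sub>v x)" by (rule assoc_mult_mat_vec[OF E L x])
  also have "HB (\<rho> N) *\<^sub>v (HB e *\<^sub>v (L *\<^sub>v x)) = HB \<alpha> *\<^sub>v (HB (\<rho> M) *\<^sub>v (L *\<^sub>v x))"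
    using e_vec[OF Lx] HB_comp_vec[of "\<iota> N" N X "\<rho> N" N] rN HB_mult_carrier[OF \<alpha> \<rho>Lx] by simp
  also have "I N *\<^sub>v \<dots> = HdR \<alpha> *\<^sub>v (I M *\<^sub>v (HB (\<rho> M) *\<^sub>v (L *\<^sub>v x)))"
    by (rule comparison_natural_vec[OF \<alpha> \<rho>Lx])
  finally show ?thesis
    using twisted_comparison_mult_vec[OF M \<tau>] by (simp add: x_def)
qed

lemma pairing_twisted_relation_comb:
  assumes R: "valid_relation_comb R"
    and objs: "\<And>c M N \<alpha> \<tau> \<eta>. (c, M, N, \<alpha>, \<tau>, \<eta>) \<in> set R \<Longrightarrow> M \<in> set zs \<and> N \<in> set zs"
    and comm: "\<And>c M N \<alpha> \<tau> \<eta>. (c, M, N, \<alpha>, \<tau>, \<eta>) \<in> set R \<Longrightarrow>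
      L * HB (cmp (\<iota> N) (cmp \<alpha> (\<rho> M))) = HB (cmp (\<iota> N) (cmp \<alpha> (\<rho> M))) * L"
  shows "pairing zs (twisted_comparison \<iota> \<rho> L) (relation_comb R) = 0"
  unfolding pairing_relation_comb
proof (rule sum_list_map_zero)
  fix r assume "r \<in> set R"
  moreover obtain c M N \<alpha> \<tau> \<eta> where r: "r = (c, M, N, \<alpha>, \<tau>, \<eta>)" by (cases r)
  ultimately have in_R: "(c, M, N, \<alpha>, \<tau>, \<eta>) \<in> set R" by simp
  have MN: "M \<in> set zs" "N \<in> set zs" using objs[OF in_R] by auto
  have v: "\<alpha> \<in> hom C M N" "\<tau> \<in> carrier_vec (dB M)" "\<eta> \<in> carrier_vec (dR N)"
    using bspec[OF R[unfolded valid_relation_comb_def] in_R] by (auto simp: Fvec_carrier)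
  show "(case r of (c, M, N, \<alpha>, \<tau>, \<eta>) \<Rightarrow> c * pairing zs (twisted_comparison \<iota> \<rho> L) (relation_tensor M N \<alpha> \<tau> \<eta>)) = 0"
    using pairing_relation_tensor[OF MN v twisted_comparison_carrier[OF MN(1)] twisted_comparison_carrier[OF MN(2)]
        twisted_comparison_natural[OF MN v(1) comm[OF in_R] v(2)]] r
    by simp
qed

end

text \<open>A vanishing period \<open>(\<sigma> \<otimes> \<omega>)\<^sub>M = \<Sum> c r\<close> lives on finitely many objects; their biproduct \<open>X\<close>
  turns the morphisms of the relations into endomorphisms of \<open>X\<close>, and every \<open>L\<close> commuting with
  those yields a twisted comparison that still kills the relations.\<close>
lemma relation_comb_twisted_vanishing:
  assumes R: "valid_relation_comb R" and eq: "pt M \<sigma> \<omega> = relation_comb R"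
    and \<sigma>: "\<sigma> \<in> carrier_vec (dB M)" and \<omega>: "\<omega> \<in> carrier_vec (dR M)"
  shows "\<exists>X \<iota> \<rho> es. \<iota> M \<in> hom C M X \<and> \<rho> M \<in> hom C X M \<and> cmp (\<rho> M) (\<iota> M) = cid C M \<and>
    (\<forall>e\<in>set es. e \<in> hom C X X) \<and>
    (\<forall>L\<in>carrier_mat (dB X) (dB X). (\<forall>e\<in>set es. L * HB e = HB e * L) \<longrightarrow>
       \<omega> \<bullet> (I M *\<^sub>v (HB (\<rho> M) *\<^sub>v (L *\<^sub>v (HB (\<iota> M) *\<^sub>v \<sigma>)))) = 0)"
proof -
  define zs where "zs = M # map (\<lambda>(c, M', N', \<alpha>, \<tau>, \<eta>). M') R @ map (\<lambda>(c, M', N', \<alpha>, \<tau>, \<eta>). N') R"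
  have M: "M \<in> set zs" unfolding zs_def by simp
  have objs: "M' \<in> set zs \<and> N' \<in> set zs" if "(c, M', N', \<alpha>, \<tau>, \<eta>) \<in> set R" for c M' N' \<alpha> \<tau> \<eta>
  proof -
    have "M' \<in> (\<lambda>(c, M', N', \<alpha>, \<tau>, \<eta>). M') ` set R" "N' \<in> (\<lambda>(c, M', N', \<alpha>, \<tau>, \<eta>). N') ` set R"
      by (rule image_eqI[OF _ that], simp)+
    then show ?thesis unfolding zs_def set_append list.set(2) set_map by blast
  qed
  obtain \<iota> X \<rho> where retract:
    "\<And>Z. Z \<in> set zs \<Longrightarrow> \<iota> Z \<in> hom C Z X \<and> \<rho> Z \<in> hom C X Z \<and> cmp (\<rho> Z) (\<iota> Z) = cid C Z"
    by (rule retracts_into_object[of zs]) (rule that)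
  define es where "es = map (\<lambda>(c, M', N', \<alpha>, \<tau>, \<eta>). cmp (\<iota> N') (cmp \<alpha> (\<rho> M'))) R"
  have es_in: "cmp (\<iota> N') (cmp \<alpha> (\<rho> M')) \<in> set es" if "(c, M', N', \<alpha>, \<tau>, \<eta>) \<in> set R"
    for c M' N' \<alpha> \<tau> \<eta>
    using that unfolding es_def by force
  have es_hom: "\<forall>e\<in>set es. e \<in> hom C X X"
  proof
    fix e assume e: "e \<in> set es"
    obtain r where "e = (case r of (c, M', N', \<alpha>, \<tau>, \<eta>) \<Rightarrow> cmp (\<iota> N') (cmp \<alpha> (\<rho> M')))" "r \<in> set R"
      using e unfolding es_def set_map by (rule imageE)
    moreover obtain c M' N' \<alpha> \<tau> \<eta> where "r = (c, M', N', \<alpha>, \<tau>, \<eta>)" by (cases r)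
    ultimately have r: "(c, M', N', \<alpha>, \<tau>, \<eta>) \<in> set R" "e = cmp (\<iota> N') (cmp \<alpha> (\<rho> M'))" by auto
    have "\<alpha> \<in> hom C M' N'" using bspec[OF R[unfolded valid_relation_comb_def] r(1)] by simp
    with retract[OF conjunct1[OF objs[OF r(1)]]] retract[OF conjunct2[OF objs[OF r(1)]]]
    show "e \<in> hom C X X" unfolding r(2) by (blast intro: comp_hom)
  qed
  have vanish: "\<forall>L\<in>carrier_mat (dB X) (dB X). (\<forall>e\<in>set es. L * HB e = HB e * L) \<longrightarrow>
       \<omega> \<bullet> (I M *\<^sub>v (HB (\<rho> M) *\<^sub>v (L *\<^sub>v (HB (\<iota> M) *\<^sub>v \<sigma>)))) = 0"
  proof (intro ballI impI)
    fix L assume L: "L \<in> carrier_mat (dB X) (dB X)" and comm: "\<forall>e\<in>set es. L * HB e = HB e * L"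
    have comm': "L * HB (cmp (\<iota> N') (cmp \<alpha> (\<rho> M'))) = HB (cmp (\<iota> N') (cmp \<alpha> (\<rho> M'))) * L"
      if "(c, M', N', \<alpha>, \<tau>, \<eta>) \<in> set R" for c M' N' \<alpha> \<tau> \<eta>
      using comm es_in[OF that] by blast
    have "\<omega> \<bullet> (twisted_comparison \<iota> \<rho> L M *\<^sub>v \<sigma>) = pairing zs (twisted_comparison \<iota> \<rho> L) (pt M \<sigma> \<omega>)"
      using pairing_ptensor[OF M \<sigma> \<omega>] twisted_comparison_carrier[OF retract L M] by simp
    also have "\<dots> = 0"
      unfolding eq
      by (rule pairing_twisted_relation_comb[where zs=zs and X=X and \<iota>=\<iota> and \<rho>=\<rho> and L=L])
        (fact retract L R objs comm')+
    finally show "\<omega> \<bullet> (I M *\<^sub>v (HB (\<rho> M) *\<^sub>v (L *\<^sub>v (HB (\<iota> M) *\<^sub>v \<sigma>)))) = 0"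
      using twisted_comparison_mult_vec[OF retract L M \<sigma>] by simp
  qed
  show ?thesis
    by (rule exI[of _ X], rule exI[of _ \<iota>], rule exI[of _ \<rho>], rule exI[of _ es], intro conjI)
      (fact retract[OF M, THEN conjunct1] retract[OF M, THEN conjunct2, THEN conjunct1]
        retract[OF M, THEN conjunct2, THEN conjunct2] es_hom vanish)+
qed

lemma vanishing_period_splits:
  assumes A: "period_conjecture C K dB HB dR HdR I"
    and \<sigma>: "\<sigma> \<in> Fvec \<rat> (dB M)" and \<omega>: "\<omega> \<in> Fvec K (dR M)" and z: "period I M \<sigma> \<omega> = 0"
  shows "\<exists>N' N s p. s \<in> hom C N' M \<and> p \<in> hom C M N \<and> short_exact C s p \<and>
          (\<exists>\<tau>\<in>Fvec \<rat> (dB N'). \<sigma> = HB s *\<^sub>v \<tau>) \<and>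
          (\<exists>\<eta>\<in>Fvec K (dR N). \<omega> = dual_map (HdR p) \<eta>)"
proof -
  have "pt M \<sigma> \<omega> \<in> relspan"
    using A[unfolded period_conjecture_def, rule_format, of "[(M, \<sigma>, \<omega>)]"] \<sigma> \<omega> z by simp
  then obtain R where R: "valid_relation_comb R" "pt M \<sigma> \<omega> = relation_comb R"
    using relspan_relation_comb by blast
  then obtain X \<iota> \<rho> es where rM: "\<iota> M \<in> hom C M X" "\<rho> M \<in> hom C X M" "cmp (\<rho> M) (\<iota> M) = cid C M"
    and es: "\<forall>e\<in>set es. e \<in> hom C X X"
    and vanish: "\<forall>L\<in>carrier_mat (dB X) (dB X). (\<forall>e\<in>set es. L * HB e = HB e * L) \<longrightarrow>
       \<omega> \<bullet> (I M *\<^sub>v (HB (\<rho> M) *\<^sub>v (L *\<^sub>v (HB (\<iota> M) *\<^sub>v \<sigma>)))) = 0"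
    using relation_comb_twisted_vanishing[OF R Fvec_carrier[OF \<sigma>] Fvec_carrier[OF \<omega>]] by blast
  obtain G z\<^sub>0 h L where G: "z\<^sub>0 \<in> Fvec \<rat> (dB G)"
    "\<forall>x\<in>Fvec \<rat> (dB X). h x \<in> hom C G X \<and> HB (h x) *\<^sub>v z\<^sub>0 = x"
    "\<forall>z\<in>Fvec \<rat> (dB G). L z \<in> carrier_mat (dB X) (dB X) \<and> (\<forall>e\<in>set es. L z * HB e = HB e * L z)"
    "\<forall>z\<in>Fvec \<rat> (dB G). \<forall>x\<in>Fvec \<rat> (dB X). HB (h x) *\<^sub>v z = L z *\<^sub>v x"
    using B.commutant_representable[where es=es and X=X] es by blast
  define x where "x = HB (\<iota> M) *\<^sub>v \<sigma>"
  have x: "x \<in> Fvec \<rat> (dB X)" unfolding x_def using B.H_mult_Fvec[of \<sigma> "\<iota> M"] \<sigma> rM by (simp add: hom_iff)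
  define g where "g = cmp (\<rho> M) (h x)"
  have g: "g \<in> hom C G M" unfolding g_def using comp_hom G(2)[rule_format, OF x] rM by blast
  have g_vec: "HB g *\<^sub>v z = HB (\<rho> M) *\<^sub>v (HB (h x) *\<^sub>v z)" if "z \<in> Fvec \<rat> (dB G)" for z
    using HB_comp_vec[of "h x" G X "\<rho> M" M z] G(2)[rule_format, OF x] rM Fvec_carrier[OF that]
    by (simp add: g_def)
  obtain N' N s p where sp: "s \<in> hom C N' M" "p \<in> hom C M N" "short_exact C s p"
    "\<forall>v\<in>Fvec \<rat> (dB G). \<exists>u\<in>Fvec \<rat> (dB N'). HB s *\<^sub>v u = HB g *\<^sub>v v"
    "\<forall>u\<in>Fvec \<rat> (dB N'). \<exists>v\<in>Fvec \<rat> (dB G). HB s *\<^sub>v u = HB g *\<^sub>v v"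
    using B.image_short_exact[of g] g by (auto simp: hom_iff)
  have "HB g *\<^sub>v z\<^sub>0 = \<sigma>"
    using g_vec[OF G(1)] G(2)[rule_format, OF x] HB_comp_vec[of "\<iota> M" M X "\<rho> M" M \<sigma>] rM Fvec_carrier[OF \<sigma>]
    by (simp add: x_def)
  then obtain \<tau> where \<tau>: "\<tau> \<in> Fvec \<rat> (dB N')" "\<sigma> = HB s *\<^sub>v \<tau>" using sp(4) G(1) by metis
  have "\<omega> \<bullet> (I M *\<^sub>v (HB g *\<^sub>v z)) = 0" if z: "z \<in> Fvec \<rat> (dB G)" for z
    using mp[OF bspec[OF vanish G(3)[rule_format, OF z, THEN conjunct1]] G(3)[rule_format, OF z, THEN conjunct2]]
      g_vec[OF z] G(4)[rule_format, OF z x]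
    by (simp add: x_def)
  then have "\<exists>\<eta>\<in>Fvec K (dR N). \<omega> = dual_map (HdR p) \<eta>"
    using dual_map_if_annihilates_image[OF sp(1-3) \<omega>] sp(5) by metis
  then show ?thesis using sp(1-3) \<tau> by blast
qed

end

theorem mainTheorem7:
  fixes C :: "('o, 'm) qcat"
    and K :: "complex set"
    and dB dR :: "'o \<Rightarrow> nat"
    and HB HdR :: "'m \<Rightarrow> complex mat"
    and I :: "'o \<Rightarrow> complex mat"
  assumes "subfield_C K"
    and "Qlinear_abelian C"
    and "fiber_functor C \<rat> dB HB"
    and "fiber_functor C K dR HdR"
    and "comparison C dB HB dR HdR I"
  shows "period_conjecture C K dB HB dR HdR I \<longleftrightarrow>
    (\<forall>M \<sigma> \<omega>. \<sigma> \<in> Fvec \<rat> (dB M) \<longrightarrow> \<omega> \<in> Fvec K (dR M) \<longrightarrow> period I M \<sigma> \<omega> = 0 \<longrightarrow>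
       (\<exists>N' N s p. s \<in> hom C N' M \<and> p \<in> hom C M N \<and> short_exact C s p \<and>
          (\<exists>\<tau>\<in>Fvec \<rat> (dB N'). \<sigma> = HB s *\<^sub>v \<tau>) \<and>
          (\<exists>\<eta>\<in>Fvec K (dR N). \<omega> = dual_map (HdR p) \<eta>)))"
proof -
  interpret S: period_data C K dB dR HB HdR I
    by (intro period_data.intro qlinear_abelian_cat.intro period_data_axioms.intro) (use assms in auto)
  show ?thesis using S.period_conjecture_if_periods_split S.vanishing_period_splits by blast
qed

end
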